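(* Let $\psi:N^2\to\mathbb{R}^3$, $(v,w)\mapsto(v,w,f(v,w))$, be a hyperbolic paraboloid with affine normal $(0,0,1)$. Define $\varphi(t,v,w)=(tv,tw,tf(v,w)-ct^4,t)$ or $\varphi(t,v,w)=(v,w,f(v,w)+ct^3,t^4)$, where $t\in\mathbb{R}^+$ and $c\neq0$. Then $\varphi$ defines a $3$-dimensional indefinite improper affine hypersphere which admits a pointwise $\mathrm{SO}(1,1)$-symmetry.
   Context: Setting: for a nondegenerate hypersurface $\varphi:M^3\to\mathbb{R}^4$ with Blaschke normal $\xi$, $D_X\varphi_*Y=\varphi_*(\nabla_XY)+h(X,Y)\xi$ and $D_X\xi=-\varphi_*(SX)$ define affine metric $h$ and shape operator $S$; $K=\nabla-\hat\nabla$ is the difference tensor ($\hat\nabla$ Levi-Civita of $h$). Affine hypersphere: $S=H\,\mathrm{Id}$, $H$ constant; improper if $H=0$; indefinite if $h$ is indefinite (Lorentzian). Pointwise $G$-symmetry: for every $p$ the group of $h_p$-isometries $L$ of $T_pM$ with $\det L=1$ and $K_p(LX,LY)=LK_p(X,Y)$ is isomorphic to $G$. *)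

theory Defs
  imports "HOL-Analysis.Analysis" "HOL-Algebra.Group"
begin

text \<open>Coordinates: a point of the parameter domain is p :: real^3; the coordinate
  vector fields are the partial derivatives in the directions axis i 1.
  The tangent space T_pM is identified with real^3 via the coordinate basis.\<close>

definition pd :: "(real^3 \<Rightarrow> 'a::real_normed_vector) \<Rightarrow> 3 \<Rightarrow> real^3 \<Rightarrow> 'a" where
  "pd F i p = vector_derivative (\<lambda>s. F (p + s *\<^sub>R axis i 1)) (at 0)"

definition frame_det :: "(real^3 \<Rightarrow> real^4) \<Rightarrow> (real^3 \<Rightarrow> real^4) \<Rightarrow> real^3 \<Rightarrow> real" where
  "frame_det \<phi> \<xi> p = det ((\<chi> r. if r = (1::4) then pd \<phi> 1 p else if r = 2 then pd \<phi> 2 p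
                                 else if r = 3 then pd \<phi> 3 p else \<xi> p) :: real^4^4)"

text \<open>Blaschke structure of \<phi> on the open domain U: xi is the Blaschke (affine) normal,
  h p the matrix of the affine metric (h p $ i $ j = h(d_i,d_j)), \<Gamma> p i j $ k the
  coefficients of the induced connection (nabla_{d_i} d_j = sum_k \<Gamma> p i j $ k d_k) and
  S p the matrix of the shape operator (S d_i = sum_k S p $ k $ i d_k).
  Equations: D_X phi_* Y = phi_*(nabla_X Y) + h(X,Y) xi,  D_X xi = - phi_*(S X);
  nondegenerate h; Blaschke normalisation theta = +- omega_h, i.e.
  det(phi_1,phi_2,phi_3,xi)^2 = |det h|.\<close>
definition blaschke_structure ::
  "(real^3) set \<Rightarrow> (real^3 \<Rightarrow> real^4) \<Rightarrow> (real^3 \<Rightarrow> real^4) \<Rightarrow> (real^3 \<Rightarrow> real^3^3)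
    \<Rightarrow> (real^3 \<Rightarrow> 3 \<Rightarrow> 3 \<Rightarrow> real^3) \<Rightarrow> (real^3 \<Rightarrow> real^3^3) \<Rightarrow> bool" where
  "blaschke_structure U \<phi> \<xi> h \<Gamma> S \<longleftrightarrow>
     open U \<and>
     \<phi> differentiable_on U \<and> (\<forall>i. pd \<phi> i differentiable_on U) \<and>
     \<xi> differentiable_on U \<and> (\<forall>i j. (\<lambda>q. h q $ i $ j) differentiable_on U) \<and>
     (\<forall>p\<in>U.
        frame_det \<phi> \<xi> p \<noteq> 0 \<and>
        (\<forall>i j. pd (pd \<phi> j) i p = (\<Sum>k\<in>UNIV. (\<Gamma> p i j $ k) *\<^sub>R pd \<phi> k p) + (h p $ i $ j) *\<^sub>R \<xi> p) \<and>
        (\<forall>i. pd \<xi> i p = - (\<Sum>k\<in>UNIV. (S p $ k $ i) *\<^sub>R pd \<phi> k p)) \<and>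
        det (h p) \<noteq> 0 \<and>
        (frame_det \<phi> \<xi> p)\<^sup>2 = \<bar>det (h p)\<bar>)"

definition has_blaschke_normal :: "(real^3) set \<Rightarrow> (real^3 \<Rightarrow> real^4) \<Rightarrow> bool" where
  "has_blaschke_normal U \<phi> \<longleftrightarrow> (\<exists>\<xi> h \<Gamma> S. blaschke_structure U \<phi> \<xi> h \<Gamma> S)"

text \<open>Affine hypersphere: S = H Id with H constant; improper: H = 0.\<close>
definition improper_affine_hypersphere :: "(real^3) set \<Rightarrow> (real^3 \<Rightarrow> real^4) \<Rightarrow> bool" where
  "improper_affine_hypersphere U \<phi> \<longleftrightarrow> has_blaschke_normal U \<phi> \<and>
     (\<forall>\<xi> h \<Gamma> S. blaschke_structure U \<phi> \<xi> h \<Gamma> S \<longrightarrow> (\<forall>p\<in>U. S p = 0))"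

definition indefinite_form :: "real^3^3 \<Rightarrow> bool" where
  "indefinite_form H \<longleftrightarrow> (\<exists>X. X \<bullet> (H *v X) > 0) \<and> (\<exists>Y. Y \<bullet> (H *v Y) < 0)"

definition indefinite_hypersurface :: "(real^3) set \<Rightarrow> (real^3 \<Rightarrow> real^4) \<Rightarrow> bool" where
  "indefinite_hypersurface U \<phi> \<longleftrightarrow>
     (\<forall>\<xi> h \<Gamma> S. blaschke_structure U \<phi> \<xi> h \<Gamma> S \<longrightarrow> (\<forall>p\<in>U. indefinite_form (h p)))"

definition lc_christoffel :: "(real^3 \<Rightarrow> real^3^3) \<Rightarrow> real^3 \<Rightarrow> 3 \<Rightarrow> 3 \<Rightarrow> real^3" where
  "lc_christoffel h p i j = (\<chi> k. (1/2) * (\<Sum>l\<in>UNIV. matrix_inv (h p) $ k $ l *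
      (pd (\<lambda>q. h q $ j $ l) i p + pd (\<lambda>q. h q $ i $ l) j p - pd (\<lambda>q. h q $ i $ j) l p)))"

definition diff_tensor :: "(real^3 \<Rightarrow> real^3^3) \<Rightarrow> (real^3 \<Rightarrow> 3 \<Rightarrow> 3 \<Rightarrow> real^3) \<Rightarrow> real^3
                             \<Rightarrow> real^3 \<Rightarrow> real^3 \<Rightarrow> real^3" where
  "diff_tensor h \<Gamma> p X Y = (\<Sum>i\<in>UNIV. \<Sum>j\<in>UNIV. (X $ i * Y $ j) *\<^sub>R (\<Gamma> p i j - lc_christoffel h p i j))"

definition sym_group :: "real^3^3 \<Rightarrow> (real^3 \<Rightarrow> real^3 \<Rightarrow> real^3) \<Rightarrow> (real^3^3) monoid" where
  "sym_group H K = \<lparr> carrier = {L. transpose L ** H ** L = H \<and> det L = 1 \<and>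
                          (\<forall>X Y. K (L *v X) (L *v Y) = L *v K X Y)},
                     mult = (\<lambda>A B. A ** B), one = mat 1 \<rparr>"

definition J11 :: "real^2^2" where
  "J11 = (\<chi> i j. if i = j then (if i = 1 then 1 else -1) else 0)"

definition SO11 :: "(real^2^2) monoid" where
  "SO11 = \<lparr> carrier = {A. transpose A ** J11 ** A = J11 \<and> det A = 1},
            mult = (\<lambda>A B. A ** B), one = mat 1 \<rparr>"

text \<open>Isomorphism of (closed linear) matrix groups: a group isomorphism which is a
  homeomorphism (for closed matrix groups this is the same as a Lie group isomorphism).\<close>
definition matrix_group_iso :: "('a::topological_space) monoid \<Rightarrow> ('b::topological_space) monoid \<Rightarrow> bool" where
  "matrix_group_iso G H \<longleftrightarrow>
     (\<exists>g g'. g \<in> hom G H \<and> homeomorphism (carrier G) (carrier H) g g')"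

definition pointwise_symmetry :: "(real^3) set \<Rightarrow> (real^3 \<Rightarrow> real^4) \<Rightarrow> ('b::topological_space) monoid \<Rightarrow> bool" where
  "pointwise_symmetry U \<phi> G \<longleftrightarrow>
     (\<forall>\<xi> h \<Gamma> S. blaschke_structure U \<phi> \<xi> h \<Gamma> S \<longrightarrow>
        (\<forall>p\<in>U. matrix_group_iso (sym_group (h p) (diff_tensor h \<Gamma> p)) G))"

text \<open>psi(v,w) = (v,w,f(v,w)) is (an open piece of) a hyperbolic paraboloid with affine
  normal (0,0,1): f is quadratic with constant Hessian of determinant -1.\<close>
definition hyperbolic_paraboloid_graph :: "(real \<times> real) set \<Rightarrow> (real \<Rightarrow> real \<Rightarrow> real) \<Rightarrow> bool" where
  "hyperbolic_paraboloid_graph N f \<longleftrightarrow> open N \<and> N \<noteq> {} \<and>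
     (\<exists>a b d e g k. a * d - b\<^sup>2 = -1 \<and>
        (\<forall>(v,w)\<in>N. f v w = (a * v\<^sup>2 + 2 * b * v * w + d * w\<^sup>2) / 2 + e * v + g * w + k))"

end

theory Submission
  imports Defs
begin

text \<open>Both immersions are treated alike. Their coordinate frame \<open>\<phi>\<^sub>1, \<phi>\<^sub>2, \<phi>\<^sub>3\<close> is
  annihilated by an explicit conormal field \<open>\<Omega>\<close>, a fixed vector \<open>n\<close> with \<open>\<Omega> \<cdot> n = 1\<close> spans
  the common kernel of the derivatives of \<open>\<Omega>\<close>, and the second derivatives decompose as
  \<open>\<phi>\<^sub>i\<^sub>j = \<Sigma> \<Gamma>\<^sub>0\<^sub>i\<^sub>j\<^sup>k \<phi>\<^sub>k + H\<^sub>i\<^sub>j n\<close> with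
  \<open>H = diag(-12 c t\<^sup>2, \<beta> t Hess f)\<close>, \<open>\<beta> \<in> {1, 4}\<close>.
  For any Blaschke structure, pairing the Gauss equation with \<open>\<Omega>\<close> gives \<open>H = (\<Omega> \<cdot> \<xi>) h\<close>,
  and the volume normalisation then forces \<open>\<bar>\<Omega> \<cdot> \<xi>\<bar>\<close> to be a constant. So \<open>\<Omega> \<cdot> \<xi>\<close>
  is locally constant; as \<open>\<Omega> \<cdot> \<partial>\<xi> = 0\<close>, also \<open>\<partial>\<Omega> \<cdot> \<xi> = 0\<close>, whence \<open>\<xi>\<close> is a
  constant multiple of \<open>n\<close>: the shape operator vanishes and \<open>h\<close> is a constant multiple of
  \<open>H\<close>, indefinite because \<open>det Hess f = -1\<close>. The difference tensor is
  \<open>K(e\<^sub>1, e\<^sub>1) = \<alpha> e\<^sub>1\<close>, \<open>K(e\<^sub>1, X) = -\<alpha>/2 X\<close>, \<open>K(X, Y) = \<kappa> Hess f(X, Y) e\<^sub>1\<close> on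
  the \<open>(v, w)\<close>-plane with \<open>\<alpha> \<noteq> 0\<close>; its unimodular \<open>h\<close>-isometries fix \<open>e\<^sub>1\<close> and act
  on the plane as \<open>x I + y J\<close> with \<open>J\<^sup>2 = I\<close>, \<open>x\<^sup>2 - y\<^sup>2 = 1\<close>, a copy of \<open>SO(1,1)\<close>.\<close>

section \<open>Vectors and determinants\<close>

lemma vector4_nth [simp]:
  "(vector [x, y, z, w] :: 'a::zero^4) $ 1 = x" "(vector [x, y, z, w] :: 'a^4) $ 2 = y"
  "(vector [x, y, z, w] :: 'a^4) $ 3 = z" "(vector [x, y, z, w] :: 'a^4) $ 4 = w"
  unfolding vector_def by simp_all

lemma vector4_eq_sum_axis:
  "(vector [x1, x2, x3, x4] :: real^4) =
     x1 *\<^sub>R axis 1 1 + x2 *\<^sub>R axis 2 1 + x3 *\<^sub>R axis 3 1 + x4 *\<^sub>R axis 4 1"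
  by (simp add: vec_eq_iff forall_4 axis_def)

lemma has_vector_derivative_vector4:
  assumes "(f1 has_real_derivative d1) (at s within S)" "(f2 has_real_derivative d2) (at s within S)"
    "(f3 has_real_derivative d3) (at s within S)" "(f4 has_real_derivative d4) (at s within S)"
  shows "((\<lambda>s. vector [f1 s, f2 s, f3 s, f4 s] :: real^4) has_vector_derivative
           vector [d1, d2, d3, d4]) (at s within S)"
  unfolding vector4_eq_sum_axis
  by (rule derivative_eq_intros assms has_vector_derivative_const refl | simp)+

lemma differentiable_vec_nth [derivative_intros, simp]: "(\<lambda>x. x $ i) differentiable F"
  by (rule bounded_linear_imp_differentiable[OF bounded_linear_vec_nth])

lemma differentiable_vector4 [derivative_intros]:
  assumes "f1 differentiable (at x within S)" "f2 differentiable (at x within S)"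
    "f3 differentiable (at x within S)" "f4 differentiable (at x within S)"
  shows "(\<lambda>x. vector [f1 x, f2 x, f3 x, f4 x] :: real^4) differentiable (at x within S)"
  unfolding vector4_eq_sum_axis by (intro derivative_intros assms)

lemma det_4:
  "det (A::'a::comm_ring_1^4^4) =
     A$1$1 * (A$2$2 * A$3$3 * A$4$4 + A$2$3 * A$3$4 * A$4$2 + A$2$4 * A$3$2 * A$4$3
            - A$2$2 * A$3$4 * A$4$3 - A$2$3 * A$3$2 * A$4$4 - A$2$4 * A$3$3 * A$4$2)
   - A$1$2 * (A$2$1 * A$3$3 * A$4$4 + A$2$3 * A$3$4 * A$4$1 + A$2$4 * A$3$1 * A$4$3
            - A$2$1 * A$3$4 * A$4$3 - A$2$3 * A$3$1 * A$4$4 - A$2$4 * A$3$3 * A$4$1)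
   + A$1$3 * (A$2$1 * A$3$2 * A$4$4 + A$2$2 * A$3$4 * A$4$1 + A$2$4 * A$3$1 * A$4$2
            - A$2$1 * A$3$4 * A$4$2 - A$2$2 * A$3$1 * A$4$4 - A$2$4 * A$3$2 * A$4$1)
   - A$1$4 * (A$2$1 * A$3$2 * A$4$3 + A$2$2 * A$3$3 * A$4$1 + A$2$3 * A$3$1 * A$4$2
            - A$2$1 * A$3$3 * A$4$2 - A$2$2 * A$3$1 * A$4$3 - A$2$3 * A$3$2 * A$4$1)"
proof -
  have f1: "finite {2::4, 3, 4}" "1 \<notin> {2::4, 3, 4}" by auto
  have f2: "finite {3::4, 4}" "2 \<notin> {3::4, 4}" by auto
  have f3: "finite {4::4}" "3 \<notin> {4::4}" by auto
  show ?thesis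
    unfolding det_def UNIV_4 sum_over_permutations_insert[OF f1]
      sum_over_permutations_insert[OF f2] sum_over_permutations_insert[OF f3] permutes_sing
    by (simp add: sign_swap_id permutation_swap_id permutation_compose sign_compose sign_id
        swap_id_eq algebra_simps)
qed

lemma det_scaleR_3: "det (c *\<^sub>R A :: real^3^3) = c ^ 3 * det A"
  by (simp add: det_3 algebra_simps power3_eq_cube)

definition rows4 :: "real^4 \<Rightarrow> real^4 \<Rightarrow> real^4 \<Rightarrow> real^4 \<Rightarrow> real^4^4" where
  "rows4 x1 x2 x3 x4 = (\<chi> r. if r = 1 then x1 else if r = 2 then x2 else if r = 3 then x3 else x4)"

lemma rows4_nth [simp]:
  "rows4 x1 x2 x3 x4 $ 1 = x1" "rows4 x1 x2 x3 x4 $ 2 = x2"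
  "rows4 x1 x2 x3 x4 $ 3 = x3" "rows4 x1 x2 x3 x4 $ 4 = x4"
  by (simp_all add: rows4_def)

lemma frame_det_eq_det_rows4:
  "frame_det \<phi> \<xi> p = det (rows4 (pd \<phi> 1 p) (pd \<phi> 2 p) (pd \<phi> 3 p) (\<xi> p))"
  unfolding frame_det_def rows4_def ..

lemma rows4_independent:
  fixes v :: "3 \<Rightarrow> real^4"
  assumes "det (rows4 (v 1) (v 2) (v 3) x) \<noteq> 0" "(\<Sum>k\<in>UNIV. y $ k *\<^sub>R v k) = 0"
  shows "y = 0"
proof -
  let ?M = "rows4 (v 1) (v 2) (v 3) x"
  define c :: "4 \<Rightarrow> real" where
    "c r = (if r = 1 then y $ 1 else if r = 2 then y $ 2 else if r = 3 then y $ 3 else 0)" for r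
  have "\<forall>c. (\<Sum>r\<in>UNIV. c r *s row r ?M) = 0 \<longrightarrow> (\<forall>r. c r = 0)"
    using assms(1) invertible_det_nz invertible_right_inverse matrix_right_invertible_independent_rows
    by blast
  moreover have "(\<Sum>r\<in>UNIV. c r *s row r ?M) = (\<Sum>k\<in>UNIV. y $ k *\<^sub>R v k)"
    by (simp add: sum_4 sum_3 c_def row_def scalar_mult_eq_scaleR)
  ultimately have "c 1 = 0" "c 2 = 0" "c 3 = 0" using assms(2) by simp_all
  then show "y = 0"
    by (simp add: c_def vec_eq_iff forall_3)
qed

lemma det_rows4_repeated_row:
  "det (rows4 x1 x2 x3 x1) = 0" "det (rows4 x1 x2 x3 x2) = 0" "det (rows4 x1 x2 x3 x3) = 0"
  by (simp_all add: det_4 algebra_simps)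

section \<open>Coordinate partial derivatives\<close>

lemma pd_eqI:
  "((\<lambda>s. F (p + s *\<^sub>R axis i 1)) has_vector_derivative D) (at 0) \<Longrightarrow> pd F i p = D"
  unfolding pd_def by (rule vector_derivative_at)

lemma has_vector_derivative_pd:
  assumes "F differentiable (at p)"
  shows "((\<lambda>s. F (p + s *\<^sub>R axis i 1)) has_vector_derivative pd F i p) (at 0)"
proof -
  have "(F \<circ> (\<lambda>s::real. p + s *\<^sub>R axis i 1)) differentiable (at 0)"
    using assms by (intro differentiable_chain_at derivative_intros) simp
  then show ?thesis
    unfolding pd_def by (simp add: vector_derivative_works[symmetric] o_def)
qed

lemma pd_cong:
  assumes "open V" "p \<in> V" "\<And>q. q \<in> V \<Longrightarrow> F q = G q"
  shows "pd F i p = pd G i p"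
proof -
  have "open ((\<lambda>s::real. p + s *\<^sub>R axis i 1) -` V)"
    using assms(1) by (intro continuous_open_vimage continuous_intros)
  then have "eventually (\<lambda>s. p + s *\<^sub>R axis i 1 \<in> V) (nhds (0::real))"
    using eventually_nhds_in_open[of _ 0] assms(2) by fastforce
  then have "eventually (\<lambda>s. s \<in> UNIV \<longrightarrow> F (p + s *\<^sub>R axis i 1) = G (p + s *\<^sub>R axis i 1)) (nhds 0)"
    by eventually_elim (simp add: assms(3))
  then show ?thesis
    unfolding pd_def by (intro vector_derivative_cong_eq) auto
qed

lemma pd_locally_const:
  assumes "open V" "p \<in> V" "\<And>q. q \<in> V \<Longrightarrow> F q = c"
  shows "pd F i p = 0"
  using pd_cong[OF assms] pd_eqI[OF has_vector_derivative_const] by simp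

lemma pd_vector4:
  assumes "((\<lambda>s. f1 (p + s *\<^sub>R axis i 1)) has_real_derivative d1) (at 0)"
    "((\<lambda>s. f2 (p + s *\<^sub>R axis i 1)) has_real_derivative d2) (at 0)"
    "((\<lambda>s. f3 (p + s *\<^sub>R axis i 1)) has_real_derivative d3) (at 0)"
    "((\<lambda>s. f4 (p + s *\<^sub>R axis i 1)) has_real_derivative d4) (at 0)"
  shows "pd (\<lambda>q. vector [f1 q, f2 q, f3 q, f4 q] :: real^4) i p = vector [d1, d2, d3, d4]"
  by (rule pd_eqI has_vector_derivative_vector4 assms)+

lemma pd_inner:
  assumes "F differentiable (at p)" "G differentiable (at p)"
  shows "pd (\<lambda>q. F q \<bullet> G q) i p = F p \<bullet> pd G i p + pd F i p \<bullet> G p"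
proof (rule pd_eqI)
  show "((\<lambda>s. F (p + s *\<^sub>R axis i 1) \<bullet> G (p + s *\<^sub>R axis i 1)) has_vector_derivative
          F p \<bullet> pd G i p + pd F i p \<bullet> G p) (at 0)"
    using bounded_bilinear.has_vector_derivative[OF bounded_bilinear_inner
        has_vector_derivative_pd[OF assms(1)] has_vector_derivative_pd[OF assms(2)]]
    by simp
qed

lemma pd_comp_first_coordinate:
  assumes "(F has_real_derivative D) (at (p $ 1))"
  shows "pd (\<lambda>q. F (q $ 1)) k p = (if k = 1 then D else 0)"
proof (cases "k = 1")
  case True
  have "((\<lambda>s. F (p $ 1 + s)) has_real_derivative D * 1) (at 0)"
    by (rule DERIV_chain2[of F]) (use assms in \<open>auto intro!: derivative_eq_intros\<close>)
  then show ?thesis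
    using True by (intro pd_eqI) (simp add: axis_def has_real_derivative_iff_has_vector_derivative)
next
  case False
  then show ?thesis
    by (intro pd_eqI) (simp add: axis_def)
qed

lemma differentiable_on_cong_open:
  assumes "f differentiable_on S" "open S" "\<And>x. x \<in> S \<Longrightarrow> f x = g x"
  shows "g differentiable_on S"
  using assms unfolding differentiable_on_eq_differentiable_at[OF assms(2)]
  by (metis differentiable_def has_derivative_transform_within_open)

lemma locally_constant_if_abs_constant:
  fixes g :: "'a::metric_space \<Rightarrow> real"
  assumes "continuous_on U g" "open U" "\<And>y. y \<in> U \<Longrightarrow> \<bar>g y\<bar> = m" "m > 0" "q \<in> U"
  shows "\<exists>\<epsilon>>0. ball q \<epsilon> \<subseteq> U \<and> (\<forall>y\<in>ball q \<epsilon>. g y = g q)"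
proof -
  obtain \<epsilon>1 where \<epsilon>1: "\<epsilon>1 > 0" "ball q \<epsilon>1 \<subseteq> U"
    using assms(2,5) open_contains_ball by blast
  obtain \<epsilon>2 where \<epsilon>2: "\<epsilon>2 > 0" "\<forall>y\<in>U. dist y q < \<epsilon>2 \<longrightarrow> dist (g y) (g q) < m"
    using assms(1,4,5) unfolding continuous_on_iff by blast
  define \<epsilon> where "\<epsilon> = min \<epsilon>1 \<epsilon>2"
  have "g y = g q" if "y \<in> ball q \<epsilon>" for y
  proof -
    have y: "y \<in> U" "dist y q < \<epsilon>2"
      using that \<epsilon>1 unfolding \<epsilon>_def by (auto simp: dist_commute)
    then have "\<bar>g y - g q\<bar> < m"
      using \<epsilon>2 by (simp add: dist_real_def)
    moreover have "\<bar>g y\<bar> = m" "\<bar>g q\<bar> = m"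
      using assms(3,5) y by auto
    ultimately show ?thesis
      by (auto simp: abs_if split: if_splits)
  qed
  moreover have "\<epsilon> > 0" "ball q \<epsilon> \<subseteq> U"
    using \<epsilon>1 \<epsilon>2 unfolding \<epsilon>_def by auto
  ultimately show ?thesis
    by blast
qed

section \<open>Block forms and the symmetry group of the model difference tensor\<close>

text \<open>The entries of \<open>[[a, b], [b, d]]\<close> at the coordinate indices 2 and 3; the entry at
  indices involving 1 is junk.\<close>
definition hess_coeff :: "real \<Rightarrow> real \<Rightarrow> real \<Rightarrow> 3 \<Rightarrow> 3 \<Rightarrow> real" where
  "hess_coeff a b d i j = (if i = 2 \<and> j = 2 then a else if i = 3 \<and> j = 3 then d else b)"

definition block_form :: "real \<Rightarrow> real \<Rightarrow> real \<Rightarrow> real \<Rightarrow> real \<Rightarrow> real^3^3" where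
  "block_form A B a b d =
     (\<chi> i j. if i = 1 \<and> j = 1 then A else if i = 1 \<or> j = 1 then 0 else B * hess_coeff a b d i j)"

lemma block_form_nth [simp]:
  "block_form A B a b d $ 1 $ 1 = A" "block_form A B a b d $ 1 $ 2 = 0"
  "block_form A B a b d $ 1 $ 3 = 0" "block_form A B a b d $ 2 $ 1 = 0"
  "block_form A B a b d $ 3 $ 1 = 0" "block_form A B a b d $ 2 $ 2 = B * a"
  "block_form A B a b d $ 3 $ 3 = B * d" "block_form A B a b d $ 2 $ 3 = B * b"
  "block_form A B a b d $ 3 $ 2 = B * b"
  by (simp_all add: block_form_def hess_coeff_def)

lemma det_block_form: "det (block_form A B a b d) = A * B\<^sup>2 * (a * d - b\<^sup>2)"
  by (simp add: det_3 algebra_simps power2_eq_square)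

lemma differentiable_on_block_form_nth:
  assumes "A differentiable_on U" "B differentiable_on U"
  shows "(\<lambda>q. block_form (A q) (B q) a b d $ i $ j) differentiable_on U"
  unfolding block_form_def using assms
  by (cases "i = 1 \<and> j = 1"; cases "i = 1 \<or> j = 1") (auto intro!: derivative_intros)

lemma block_form_scaleR: "c *\<^sub>R block_form A B a b d = block_form (c * A) (c * B) a b d"
  by (simp add: block_form_def vec_eq_iff)

lemma indefinite_binary_form:
  fixes a b d :: real
  assumes "a * d - b\<^sup>2 < 0"
  shows "\<exists>x y. a * x * x + 2 * b * x * y + d * y * y > 0"
    and "\<exists>x y. a * x * x + 2 * b * x * y + d * y * y < 0"
proof -
  let ?q = "\<lambda>x y. a * x * x + 2 * b * x * y + d * y * y"
  have "\<exists>x1 y1 x2 y2. ?q x1 y1 > 0 \<and> ?q x2 y2 < 0"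
  proof (cases "a = 0")
    case True
    then have "b \<noteq> 0"
      using assms by auto
    then have "?q ((1 - d) / (2 * b)) 1 = 1" "?q ((- 1 - d) / (2 * b)) 1 = -1"
      using True by (simp_all add: field_simps)
    then show ?thesis
      by (metis zero_less_one neg_less_0_iff_less)
  next
    case False
    have "?q 1 0 * ?q (- b) a = a\<^sup>2 * (a * d - b\<^sup>2)"
      by (simp add: power2_eq_square algebra_simps)
    also have "\<dots> < 0"
      using False assms by (simp add: mult_pos_neg)
    finally show ?thesis
      by (metis mult_less_0_iff)
  qed
  then show "\<exists>x y. ?q x y > 0" "\<exists>x y. ?q x y < 0"
    by blast+
qed

lemma indefinite_block_form:
  assumes "a * d - b\<^sup>2 = -1" "B \<noteq> 0"
  shows "indefinite_form (block_form A B a b d)"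
proof -
  let ?q = "\<lambda>x y. a * x * x + 2 * b * x * y + d * y * y"
  have quadratic: "vector [0, x, y] \<bullet> (block_form A B a b d *v vector [0, x, y]) = B * ?q x y"
    for x y :: real
    by (simp add: inner_vec_def matrix_vector_mult_def sum_3 algebra_simps)
  have "a * d - b\<^sup>2 < 0"
    using assms(1) by simp
  then obtain x1 y1 x2 y2 where pos: "?q x1 y1 > 0" and neg: "?q x2 y2 < 0"
    using indefinite_binary_form by blast
  consider "B > 0" | "B < 0"
    using assms(2) by linarith
  then show ?thesis
  proof cases
    case 1
    then have "B * ?q x1 y1 > 0" "B * ?q x2 y2 < 0"
      using pos neg by (simp_all add: mult_pos_neg)
    then show ?thesis
      unfolding indefinite_form_def by (metis quadratic)
  next
    case 2
    then have "B * ?q x2 y2 > 0" "B * ?q x1 y1 < 0"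
      using pos neg by (simp_all add: mult_neg_neg mult_neg_pos)
    then show ?thesis
      unfolding indefinite_form_def by (metis quadratic)
  qed
qed

definition model_tensor :: "real \<Rightarrow> real \<Rightarrow> real \<Rightarrow> real \<Rightarrow> real \<Rightarrow> real^3 \<Rightarrow> real^3 \<Rightarrow> real^3" where
  "model_tensor \<alpha> \<kappa> a b d X Y = vector
     [\<alpha> * X$1 * Y$1 + \<kappa> * (a * X$2 * Y$2 + b * (X$2 * Y$3 + X$3 * Y$2) + d * X$3 * Y$3),
      - (\<alpha> / 2) * (X$1 * Y$2 + Y$1 * X$2), - (\<alpha> / 2) * (X$1 * Y$3 + Y$1 * X$3)]"

text \<open>Since \<open>ad - b\<^sup>2 = -1\<close>, the matrix \<open>J = [[b, d], [-a, -b]]\<close> satisfies \<open>J\<^sup>2 = I\<close>, and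
  the matrices \<open>x I + y J\<close> with \<open>x\<^sup>2 - y\<^sup>2 = 1\<close> are exactly the unimodular isometries of the
  quadratic form \<open>[[a, b], [b, d]]\<close>.\<close>
definition hyp_rotation :: "real \<Rightarrow> real \<Rightarrow> real \<Rightarrow> real \<Rightarrow> real \<Rightarrow> real^3^3" where
  "hyp_rotation a b d x y = (\<chi> i j. if i = 1 \<and> j = 1 then 1 else if i = 1 \<or> j = 1 then 0
      else if i = 2 \<and> j = 2 then x + y * b else if i = 3 \<and> j = 3 then x - y * b
      else if i = 2 then y * d else - y * a)"

lemma hyp_rotation_nth [simp]:
  "hyp_rotation a b d x y $ 1 $ 1 = 1" "hyp_rotation a b d x y $ 1 $ 2 = 0"
  "hyp_rotation a b d x y $ 1 $ 3 = 0" "hyp_rotation a b d x y $ 2 $ 1 = 0"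
  "hyp_rotation a b d x y $ 3 $ 1 = 0" "hyp_rotation a b d x y $ 2 $ 2 = x + y * b"
  "hyp_rotation a b d x y $ 3 $ 3 = x - y * b" "hyp_rotation a b d x y $ 2 $ 3 = y * d"
  "hyp_rotation a b d x y $ 3 $ 2 = - y * a"
  by (simp_all add: hyp_rotation_def)

definition SO11_matrix :: "real \<Rightarrow> real \<Rightarrow> real^2^2" where
  "SO11_matrix x y = (\<chi> i j. if i = j then x else - y)"

lemma SO11_matrix_nth [simp]:
  "SO11_matrix x y $ 1 $ 1 = x" "SO11_matrix x y $ 2 $ 2 = x"
  "SO11_matrix x y $ 1 $ 2 = - y" "SO11_matrix x y $ 2 $ 1 = - y"
  by (simp_all add: SO11_matrix_def)

lemma J11_nth [simp]: "J11 $ 1 $ 1 = 1" "J11 $ 2 $ 2 = -1" "J11 $ 1 $ 2 = 0" "J11 $ 2 $ 1 = 0"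
  by (simp_all add: J11_def)

lemma unimodular_isometry_of_binary_form:
  fixes a b d m11 m12 m21 m22 :: real
  defines "x \<equiv> (m11 + m22) / 2" and "y \<equiv> (b * m11 + d * m21 - a * m12 - b * m22) / 2"
  assumes "a * d - b\<^sup>2 = -1"
    and "m11 * (a * m11 + b * m21) + m21 * (b * m11 + d * m21) = a"
    and "m11 * (a * m12 + b * m22) + m21 * (b * m12 + d * m22) = b"
    and "m12 * (a * m12 + b * m22) + m22 * (b * m12 + d * m22) = d"
    and "m11 * m22 - m12 * m21 = 1"
  shows "m11 = x + y * b" "m22 = x - y * b" "m12 = y * d" "m21 = - y * a" "x\<^sup>2 - y\<^sup>2 = 1"
proof -
  show m: "m11 = x + y * b" "m22 = x - y * b" "m12 = y * d" "m21 = - y * a"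
    using assms(3-) unfolding x_def y_def by algebra+
  have "(x + y * b) * (x - y * b) - y * d * (- y * a) = 1"
    using assms(7) unfolding m .
  then show "x\<^sup>2 - y\<^sup>2 = 1"
    using assms(3) by algebra
qed

lemma hyp_rotation_mult:
  assumes "a * d - b\<^sup>2 = -1"
  shows "hyp_rotation a b d x1 y1 ** hyp_rotation a b d x2 y2 =
           hyp_rotation a b d (x1 * x2 + y1 * y2) (x1 * y2 + y1 * x2)"
  unfolding vec_eq_iff forall_3
  using assms by (simp add: matrix_matrix_mult_def sum_3 algebra_simps) algebra

lemma SO11_matrix_mult:
  "SO11_matrix x1 y1 ** SO11_matrix x2 y2 = SO11_matrix (x1 * x2 + y1 * y2) (x1 * y2 + y1 * x2)"
  unfolding vec_eq_iff forall_2 by (simp add: matrix_matrix_mult_def sum_2 algebra_simps)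

lemma carrier_SO11: "carrier SO11 = {SO11_matrix x y | x y. x\<^sup>2 - y\<^sup>2 = 1}"
proof -
  have "\<exists>x y. M = SO11_matrix x y \<and> x\<^sup>2 - y\<^sup>2 = 1"
    if iso: "transpose M ** J11 ** M = J11" and det: "det M = 1" for M :: "real^2^2"
  proof -
    have iso_entry: "(transpose M ** J11 ** M) $ i $ j = J11 $ i $ j" for i j
      using iso by simp
    note mult = matrix_matrix_mult_def transpose_def sum_2
    have isometry: "M$1$1 * (1 * M$1$1 + 0 * M$2$1) + M$2$1 * (0 * M$1$1 + -1 * M$2$1) = 1"
      "M$1$1 * (1 * M$1$2 + 0 * M$2$2) + M$2$1 * (0 * M$1$2 + -1 * M$2$2) = 0"
      "M$1$2 * (1 * M$1$2 + 0 * M$2$2) + M$2$2 * (0 * M$1$2 + -1 * M$2$2) = -1"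
      using iso_entry[of 1 1] iso_entry[of 1 2] iso_entry[of 2 2] by (simp_all add: mult algebra_simps)
    have unimodular: "M$1$1 * M$2$2 - M$1$2 * M$2$1 = 1"
      using det by (simp add: det_2)
    define x where "x = (M$1$1 + M$2$2) / 2"
    define y where "y = - (M$2$1 + M$1$2) / 2"
    have "M$1$1 = x" "M$2$2 = x" "M$1$2 = - y" "M$2$1 = - y" "x\<^sup>2 - y\<^sup>2 = 1"
      using unimodular_isometry_of_binary_form[where a = 1 and b = 0 and d = "-1",
          OF _ isometry unimodular]
      unfolding x_def y_def by simp_all
    then show ?thesis
      by (intro exI[of _ x] exI[of _ y]) (simp add: vec_eq_iff forall_2)
  qed
  moreover have "transpose (SO11_matrix x y) ** J11 ** SO11_matrix x y = J11"
    "det (SO11_matrix x y) = 1" if "x\<^sup>2 - y\<^sup>2 = 1" for x y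
    using that unfolding vec_eq_iff forall_2
    by (simp_all add: matrix_matrix_mult_def transpose_def sum_2 det_2 power2_eq_square algebra_simps)
  ultimately show ?thesis
    by (auto simp: SO11_def)
qed

text \<open>\<open>K(e\<^sub>1, e\<^sub>1) = \<alpha> e\<^sub>1\<close>, so a symmetry maps \<open>e\<^sub>1\<close> to a vector \<open>v\<close> with
  \<open>K(v, v) = \<alpha> v\<close> and \<open>h(v, v) = h(e\<^sub>1, e\<^sub>1)\<close>; only \<open>v = e\<^sub>1\<close> qualifies.\<close>
lemma stabiliser_fixes_first_axis:
  fixes L :: "real^3^3"
  assumes nonzero: "A \<noteq> 0" "B \<noteq> 0" "\<alpha> \<noteq> 0"
    and iso: "transpose L ** block_form A B a b d ** L = block_form A B a b d"
    and tensor: "model_tensor \<alpha> \<kappa> a b d (L *v axis 1 1) (L *v axis 1 1) =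
                   L *v model_tensor \<alpha> \<kappa> a b d (axis 1 1) (axis 1 1)"
  shows "L$1$1 = 1" "L$2$1 = 0" "L$3$1 = 0"
proof -
  let ?q = "a * L$2$1 * L$2$1 + b * (L$2$1 * L$3$1 + L$3$1 * L$2$1) + d * L$3$1 * L$3$1"
  have norm: "A * L$1$1 * L$1$1 + B * ?q = A"
    using arg_cong[OF iso, of "\<lambda>M. M $ 1 $ 1"]
    by (simp add: matrix_matrix_mult_def transpose_def sum_3 algebra_simps)
  have "L *v axis 1 1 = vector [L$1$1, L$2$1, L$3$1]"
    by (simp add: vec_eq_iff forall_3 matrix_vector_mult_def sum_3 axis_def)
  moreover have "L *v vector [\<alpha>, 0, 0] = vector [\<alpha> * L$1$1, \<alpha> * L$2$1, \<alpha> * L$3$1]"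
    by (simp add: vec_eq_iff forall_3 matrix_vector_mult_def sum_3 mult.commute)
  ultimately have "\<alpha> * L$1$1 * L$1$1 + \<kappa> * ?q = \<alpha> * L$1$1"
    and "\<alpha> * (L$2$1 * (L$1$1 + 1)) = 0" and "\<alpha> * (L$3$1 * (L$1$1 + 1)) = 0"
    using tensor[unfolded vec_eq_iff forall_3]
    by (simp_all add: model_tensor_def axis_def algebra_simps)
  moreover have "L$1$1 \<noteq> -1"
  proof
    assume "L$1$1 = -1"
    with norm nonzero have "?q = 0"
      by simp
    with \<open>\<alpha> * L$1$1 * L$1$1 + \<kappa> * ?q = \<alpha> * L$1$1\<close> \<open>L$1$1 = -1\<close> nonzero show False
      by simp
  qed
  ultimately show "L$2$1 = 0" "L$3$1 = 0"
    using nonzero by auto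
  with norm \<open>\<alpha> * L$1$1 * L$1$1 + \<kappa> * ?q = \<alpha> * L$1$1\<close> nonzero show "L$1$1 = 1"
    by auto
qed

lemma stabiliser_block_form_is_hyp_rotation:
  fixes L :: "real^3^3"
  assumes Q: "a * d - b\<^sup>2 = -1" and nonzero: "A \<noteq> 0" "B \<noteq> 0" "\<alpha> \<noteq> 0"
    and L: "L \<in> carrier (sym_group (block_form A B a b d) (model_tensor \<alpha> \<kappa> a b d))"
  shows "\<exists>x y. L = hyp_rotation a b d x y \<and> x\<^sup>2 - y\<^sup>2 = 1"
proof -
  have iso: "transpose L ** block_form A B a b d ** L = block_form A B a b d" and "det L = 1"
    and "model_tensor \<alpha> \<kappa> a b d (L *v axis 1 1) (L *v axis 1 1) =
           L *v model_tensor \<alpha> \<kappa> a b d (axis 1 1) (axis 1 1)"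
    using L by (simp_all add: sym_group_def)
  then have col1: "L$1$1 = 1" "L$2$1 = 0" "L$3$1 = 0"
    using stabiliser_fixes_first_axis[OF nonzero] by blast+
  have iso_entry: "(transpose L ** block_form A B a b d ** L) $ i $ j = block_form A B a b d $ i $ j" for i j
    using iso by simp
  note mult = matrix_matrix_mult_def transpose_def sum_3
  have row1: "L$1$2 = 0" "L$1$3 = 0"
    using iso_entry[of 1 2] iso_entry[of 1 3] col1 nonzero by (simp_all add: mult)
  have "B * (L$2$2 * (a * L$2$2 + b * L$3$2) + L$3$2 * (b * L$2$2 + d * L$3$2)) = B * a"
    using iso_entry[of 2 2] col1 row1 by (simp add: mult algebra_simps)
  moreover have "B * (L$2$2 * (a * L$2$3 + b * L$3$3) + L$3$2 * (b * L$2$3 + d * L$3$3)) = B * b"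
    using iso_entry[of 2 3] col1 row1 by (simp add: mult algebra_simps)
  moreover have "B * (L$2$3 * (a * L$2$3 + b * L$3$3) + L$3$3 * (b * L$2$3 + d * L$3$3)) = B * d"
    using iso_entry[of 3 3] col1 row1 by (simp add: mult algebra_simps)
  ultimately have isometry:
    "L$2$2 * (a * L$2$2 + b * L$3$2) + L$3$2 * (b * L$2$2 + d * L$3$2) = a"
    "L$2$2 * (a * L$2$3 + b * L$3$3) + L$3$2 * (b * L$2$3 + d * L$3$3) = b"
    "L$2$3 * (a * L$2$3 + b * L$3$3) + L$3$3 * (b * L$2$3 + d * L$3$3) = d"
    using nonzero by simp_all
  have unimodular: "L$2$2 * L$3$3 - L$2$3 * L$3$2 = 1"
    using \<open>det L = 1\<close> col1 row1 by (simp add: det_3)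
  define x where "x = (L$2$2 + L$3$3) / 2"
  define y where "y = (b * L$2$2 + d * L$3$2 - a * L$2$3 - b * L$3$3) / 2"
  have "L$2$2 = x + y * b" "L$3$3 = x - y * b" "L$2$3 = y * d" "L$3$2 = - y * a" "x\<^sup>2 - y\<^sup>2 = 1"
    using unimodular_isometry_of_binary_form[OF Q isometry unimodular] unfolding x_def y_def .
  with col1 row1 show ?thesis
    by (intro exI[of _ x] exI[of _ y]) (simp add: vec_eq_iff forall_3)
qed

lemma hyp_rotation_in_stabiliser:
  assumes Q: "a * d - b\<^sup>2 = -1" and xy: "x\<^sup>2 - y\<^sup>2 = 1"
  shows "hyp_rotation a b d x y \<in> carrier (sym_group (block_form A B a b d) (model_tensor \<alpha> \<kappa> a b d))"
proof -
  let ?L = "hyp_rotation a b d x y"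
  have "transpose ?L ** block_form A B a b d ** ?L = block_form A B a b d"
    unfolding vec_eq_iff forall_3
    by (simp add: matrix_matrix_mult_def transpose_def sum_3, intro conjI; use Q xy in algebra)
  moreover have "det ?L = 1"
    using Q xy by (simp add: det_3) algebra
  moreover have "model_tensor \<alpha> \<kappa> a b d (?L *v X) (?L *v Y) = ?L *v model_tensor \<alpha> \<kappa> a b d X Y" for X Y
    unfolding vec_eq_iff forall_3
    by (simp add: model_tensor_def matrix_vector_mult_def sum_3, intro conjI)
      (use Q xy in algebra, simp_all add: field_simps)
  ultimately show ?thesis
    by (simp add: sym_group_def)
qed

lemma carrier_sym_group_block_form:
  assumes "a * d - b\<^sup>2 = -1" "A \<noteq> 0" "B \<noteq> 0" "\<alpha> \<noteq> 0"
  shows "carrier (sym_group (block_form A B a b d) (model_tensor \<alpha> \<kappa> a b d)) =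
           {hyp_rotation a b d x y | x y. x\<^sup>2 - y\<^sup>2 = 1}"
  using stabiliser_block_form_is_hyp_rotation[OF assms] hyp_rotation_in_stabiliser[OF assms(1)]
  by blast

definition rotation_to_SO11 :: "real \<Rightarrow> real \<Rightarrow> real \<Rightarrow> real^3^3 \<Rightarrow> real^2^2" where
  "rotation_to_SO11 a b d L =
     SO11_matrix ((L$2$2 + L$3$3) / 2) ((b * L$2$2 + d * L$3$2 - a * L$2$3 - b * L$3$3) / 2)"

definition SO11_to_rotation :: "real \<Rightarrow> real \<Rightarrow> real \<Rightarrow> real^2^2 \<Rightarrow> real^3^3" where
  "SO11_to_rotation a b d M = hyp_rotation a b d ((M$1$1 + M$2$2) / 2) (- (M$1$2 + M$2$1) / 2)"

lemma rotation_to_SO11_hyp_rotation: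
  assumes "a * d - b\<^sup>2 = -1"
  shows "rotation_to_SO11 a b d (hyp_rotation a b d x y) = SO11_matrix x y"
proof -
  have "b * (x + y * b) + d * (- y * a) - a * (y * d) - b * (x - y * b) = 2 * y"
    using assms by algebra
  then show ?thesis
    by (simp add: rotation_to_SO11_def)
qed

lemma SO11_to_rotation_SO11_matrix: "SO11_to_rotation a b d (SO11_matrix x y) = hyp_rotation a b d x y"
  by (simp add: SO11_to_rotation_def)

lemma continuous_on_if_const:
  "continuous_on S f \<Longrightarrow> continuous_on S g \<Longrightarrow> continuous_on S (\<lambda>x. if P then f x else g x)"
  by (cases P) auto

lemma continuous_on_SO11_matrix [continuous_intros]:
  "continuous_on S f \<Longrightarrow> continuous_on S g \<Longrightarrow> continuous_on S (\<lambda>z. SO11_matrix (f z) (g z))"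
  unfolding SO11_matrix_def
  by (intro continuous_on_vec_lambda continuous_on_if_const continuous_intros)

lemma continuous_on_hyp_rotation [continuous_intros]:
  "continuous_on S f \<Longrightarrow> continuous_on S g \<Longrightarrow> continuous_on S (\<lambda>z. hyp_rotation a b d (f z) (g z))"
  unfolding hyp_rotation_def
  by (intro continuous_on_vec_lambda continuous_on_if_const continuous_intros)

lemma sym_group_block_form_iso_SO11:
  assumes Q: "a * d - b\<^sup>2 = -1" and nonzero: "A \<noteq> 0" "B \<noteq> 0" "\<alpha> \<noteq> 0"
  shows "matrix_group_iso (sym_group (block_form A B a b d) (model_tensor \<alpha> \<kappa> a b d)) SO11"
  unfolding matrix_group_iso_def
proof (intro exI conjI)
  let ?G = "sym_group (block_form A B a b d) (model_tensor \<alpha> \<kappa> a b d)"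
  note carriers = carrier_sym_group_block_form[OF assms, of \<kappa>] carrier_SO11
  note inverse = rotation_to_SO11_hyp_rotation[OF Q] SO11_to_rotation_SO11_matrix
  have "rotation_to_SO11 a b d L \<in> carrier SO11" if "L \<in> carrier ?G" for L
    using that by (auto simp: carriers inverse; blast)
  moreover have "rotation_to_SO11 a b d (L1 ** L2) = rotation_to_SO11 a b d L1 ** rotation_to_SO11 a b d L2"
    if "L1 \<in> carrier ?G" "L2 \<in> carrier ?G" for L1 L2
    using that by (auto simp: carriers inverse hyp_rotation_mult[OF Q] SO11_matrix_mult)
  ultimately show "rotation_to_SO11 a b d \<in> hom ?G SO11"
    unfolding hom_def by (auto simp: sym_group_def SO11_def)
  show "homeomorphism (carrier ?G) (carrier SO11) (rotation_to_SO11 a b d) (SO11_to_rotation a b d)"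
  proof (rule homeomorphismI)
    show "continuous_on (carrier ?G) (rotation_to_SO11 a b d)"
      unfolding rotation_to_SO11_def by (intro continuous_intros) auto
    show "continuous_on (carrier SO11) (SO11_to_rotation a b d)"
      unfolding SO11_to_rotation_def by (intro continuous_intros) auto
  qed (auto simp: carriers inverse; blast)+
qed

section \<open>The Levi-Civita connection of a block metric\<close>

definition christoffel_model :: "real \<Rightarrow> real \<Rightarrow> real \<Rightarrow> real \<Rightarrow> real \<Rightarrow> real \<Rightarrow> 3 \<Rightarrow> 3 \<Rightarrow> real^3" where
  "christoffel_model g1 g2 g3 a b d i j =
     (if i = 1 \<and> j = 1 then g1 *\<^sub>R axis 1 1
      else if i = 1 then g2 *\<^sub>R axis j 1 else if j = 1 then g2 *\<^sub>R axis i 1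
      else (g3 * hess_coeff a b d i j) *\<^sub>R axis 1 1)"

lemma matrix_inv_unique:
  fixes A B :: "'a::semiring_1^'n^'n"
  assumes "A ** B = mat 1" "B ** A = mat 1"
  shows "matrix_inv A = B"
proof -
  have "A ** matrix_inv A = mat 1 \<and> matrix_inv A ** A = mat 1"
    unfolding matrix_inv_def by (rule someI[of _ B]) (use assms in blast)
  then have "matrix_inv A = matrix_inv A ** (A ** B)"
    using assms by simp
  also have "\<dots> = B"
    using \<open>A ** matrix_inv A = mat 1 \<and> matrix_inv A ** A = mat 1\<close>
    by (simp add: matrix_mul_assoc)
  finally show ?thesis .
qed

lemma matrix_inv_block_form:
  assumes "A \<noteq> 0" "B \<noteq> 0" "a * d - b\<^sup>2 = -1"
  shows "matrix_inv (block_form A B a b d) = block_form (1 / A) (1 / B) (- d) b (- a)"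
  using assms
  by (intro matrix_inv_unique; simp add: vec_eq_iff forall_3 matrix_matrix_mult_def sum_3 mat_def
      algebra_simps power2_eq_square)

lemma lc_christoffel_block_form:
  fixes h :: "real^3 \<Rightarrow> real^3^3" and A B :: "real \<Rightarrow> real"
  assumes V: "open V" "p \<in> V" and h: "\<And>q. q \<in> V \<Longrightarrow> h q = block_form (A (q$1)) (B (q$1)) a b d"
    and A': "(A has_real_derivative A') (at (p$1))" and B': "(B has_real_derivative B') (at (p$1))"
    and nonzero: "A (p$1) \<noteq> 0" "B (p$1) \<noteq> 0" and Q: "a * d - b\<^sup>2 = -1"
  shows "lc_christoffel h p i j =
           christoffel_model (A' / (2 * A (p$1))) (B' / (2 * B (p$1))) (- B' / (2 * A (p$1))) a b d i j"
proof -
  have pd_h: "pd (\<lambda>q. h q $ k $ l) m p = (if m = 1 then block_form A' B' a b d $ k $ l else 0)" for k l m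
  proof -
    have "pd (\<lambda>q. h q $ k $ l) m p = pd (\<lambda>q. (\<lambda>t. block_form (A t) (B t) a b d $ k $ l) (q$1)) m p"
      using V by (rule pd_cong) (simp add: h)
    also have "\<dots> = (if m = 1 then block_form A' B' a b d $ k $ l else 0)"
      by (rule pd_comp_first_coordinate)
        (use A' B' in \<open>auto simp: block_form_def intro!: derivative_eq_intros\<close>)
    finally show ?thesis .
  qed
  have inv: "matrix_inv (h p) = block_form (1 / A (p$1)) (1 / B (p$1)) (- d) b (- a)"
    unfolding h[OF V(2)] by (rule matrix_inv_block_form[OF nonzero Q])
  have b_squared: "B' * (b * (b * X)) = B' * X + B' * (a * (d * X))" for X
    using Q by algebra
  show ?thesis
    unfolding lc_christoffel_def pd_h inv
    using exhaust_3[of i] exhaust_3[of j] nonzero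
    by (auto simp: vec_eq_iff forall_3 sum_3 christoffel_model_def hess_coeff_def axis_def field_simps)
      (simp_all add: b_squared)
qed

lemma diff_tensor_christoffel_model:
  assumes "\<And>i j. \<Gamma> p i j = christoffel_model g1 g2 g3 a b d i j"
    and "\<And>i j. lc_christoffel h p i j = christoffel_model l1 l2 l3 a b d i j"
    and "g2 - l2 = - (g1 - l1) / 2"
  shows "diff_tensor h \<Gamma> p = model_tensor (g1 - l1) (g3 - l3) a b d"
proof (intro ext)
  fix X Y :: "real^3"
  have g2: "g2 = l2 - (g1 - l1) / 2"
    using assms(3) by linarith
  show "diff_tensor h \<Gamma> p X Y = model_tensor (g1 - l1) (g3 - l3) a b d X Y"
    unfolding diff_tensor_def vec_eq_iff forall_3
    by (simp add: assms(1,2) g2 sum_3 christoffel_model_def hess_coeff_def axis_def model_tensor_def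
        field_simps)
qed

text \<open>The relation between \<open>g1\<close> and \<open>g2\<close> is the apolarity condition \<open>tr K\<^sub>X = 0\<close>
  for the difference tensor.\<close>
lemma matrix_group_iso_SO11_block_form:
  fixes h :: "real^3 \<Rightarrow> real^3^3" and A B :: "real \<Rightarrow> real"
  assumes V: "open V" "p \<in> V" and h: "\<And>q. q \<in> V \<Longrightarrow> h q = block_form (A (q$1)) (B (q$1)) a b d"
    and A': "(A has_real_derivative A') (at (p$1))" and B': "(B has_real_derivative B') (at (p$1))"
    and nonzero: "A (p$1) \<noteq> 0" "B (p$1) \<noteq> 0" and Q: "a * d - b\<^sup>2 = -1"
    and \<Gamma>: "\<And>i j. \<Gamma> p i j = christoffel_model g1 g2 g3 a b d i j"
    and apolar: "g2 - B' / (2 * B (p$1)) = - (g1 - A' / (2 * A (p$1))) / 2"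
    and \<alpha>: "g1 - A' / (2 * A (p$1)) \<noteq> 0"
  shows "matrix_group_iso (sym_group (h p) (diff_tensor h \<Gamma> p)) SO11"
proof -
  have "lc_christoffel h p i j = christoffel_model (A' / (2 * A (p$1))) (B' / (2 * B (p$1)))
          (- B' / (2 * A (p$1))) a b d i j" for i j
    by (rule lc_christoffel_block_form[OF V h A' B' nonzero Q])
  from diff_tensor_christoffel_model[where h = h and \<Gamma> = \<Gamma> and p = p, OF \<Gamma> this apolar]
  have "diff_tensor h \<Gamma> p = model_tensor (g1 - A' / (2 * A (p$1))) (g3 + B' / (2 * A (p$1))) a b d"
    by simp
  then show ?thesis
    using sym_group_block_form_iso_SO11[OF Q nonzero \<alpha>] h[OF V(2)] by simp
qed

section \<open>Blaschke structures determined by a conormal field\<close>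

lemma blaschke_structureD:
  assumes "blaschke_structure U \<phi> \<xi> h \<Gamma> S"
  shows "open U" "\<xi> differentiable_on U"
    and "p \<in> U \<Longrightarrow> pd (pd \<phi> j) i p = (\<Sum>k\<in>UNIV. \<Gamma> p i j $ k *\<^sub>R pd \<phi> k p) + h p $ i $ j *\<^sub>R \<xi> p"
    and "p \<in> U \<Longrightarrow> pd \<xi> i p = - (\<Sum>k\<in>UNIV. S p $ k $ i *\<^sub>R pd \<phi> k p)"
    and "p \<in> U \<Longrightarrow> (frame_det \<phi> \<xi> p)\<^sup>2 = \<bar>det (h p)\<bar>"
  using assms unfolding blaschke_structure_def by blast+

text \<open>By \<open>det_frame\<close>, \<open>\<Omega>\<close> is the conormal of the frame \<open>P\<close> up to the factor \<open>\<rho>\<close>.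
  The constant \<open>m\<close> is fixed by the volume normalisation: \<open>\<xi> = m n\<close>, \<open>h = H / m\<close> is a
  Blaschke structure, and every Blaschke structure is of this form up to a locally constant sign.\<close>
locale conormal_frame =
  fixes U :: "(real^3) set" and \<phi> :: "real^3 \<Rightarrow> real^4" and P :: "3 \<Rightarrow> real^3 \<Rightarrow> real^4"
    and \<Omega> :: "real^3 \<Rightarrow> real^4" and \<rho> :: "real^3 \<Rightarrow> real" and n :: "real^4"
    and H :: "real^3 \<Rightarrow> real^3^3" and \<Gamma>\<^sub>0 :: "real^3 \<Rightarrow> 3 \<Rightarrow> 3 \<Rightarrow> real^3" and m :: real
  assumes open_U: "open U"
    and differentiable_\<phi>: "\<phi> differentiable_on U"
    and pd_\<phi>: "\<And>q k. q \<in> U \<Longrightarrow> pd \<phi> k q = P k q"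
    and differentiable_P: "\<And>k. P k differentiable_on U"
    and det_frame: "\<And>q x. q \<in> U \<Longrightarrow> det (rows4 (P 1 q) (P 2 q) (P 3 q) x) = \<rho> q * (\<Omega> q \<bullet> x)"
    and \<rho>_nonzero: "\<And>q. q \<in> U \<Longrightarrow> \<rho> q \<noteq> 0"
    and conormal_n: "\<And>q. q \<in> U \<Longrightarrow> \<Omega> q \<bullet> n = 1"
    and differentiable_\<Omega>: "\<Omega> differentiable_on U"
    and kernel_pd_\<Omega>: "\<And>q x. q \<in> U \<Longrightarrow> \<forall>i. pd \<Omega> i q \<bullet> x = 0 \<Longrightarrow> \<exists>r. x = r *\<^sub>R n"
    and gauss: "\<And>q i j. q \<in> U \<Longrightarrow> pd (P j) i q = (\<Sum>k\<in>UNIV. \<Gamma>\<^sub>0 q i j $ k *\<^sub>R P k q) + H q $ i $ j *\<^sub>R n"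
    and differentiable_H: "\<And>i j. (\<lambda>q. H q $ i $ j) differentiable_on U"
    and abs_det_H: "\<And>q. q \<in> U \<Longrightarrow> \<bar>det (H q)\<bar> = \<rho> q ^ 2 * m ^ 5"
    and m_pos: "m > 0"
begin

lemma pd_pd_\<phi>: "q \<in> U \<Longrightarrow> pd (pd \<phi> j) i q = pd (P j) i q"
  by (rule pd_cong[OF open_U]) (simp_all add: pd_\<phi>)

lemma independent_P: "q \<in> U \<Longrightarrow> (\<Sum>k\<in>UNIV. y $ k *\<^sub>R P k q) = 0 \<Longrightarrow> y = 0"
  by (rule rows4_independent[where x = n]) (simp_all add: det_frame conormal_n \<rho>_nonzero)

lemma conormal_P: "q \<in> U \<Longrightarrow> \<Omega> q \<bullet> P k q = 0"
  using det_frame[of q "P k q"] \<rho>_nonzero[of q] exhaust_3[of k]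
  by (auto simp: det_rows4_repeated_row)

lemma conormal_pd_P: "q \<in> U \<Longrightarrow> \<Omega> q \<bullet> pd (P j) i q = H q $ i $ j"
  by (simp add: gauss inner_add_right inner_sum_right conormal_P conormal_n)

lemma det_H_nonzero: "q \<in> U \<Longrightarrow> det (H q) \<noteq> 0"
  using abs_det_H[of q] \<rho>_nonzero[of q] m_pos by auto

theorem blaschke_structure_constant_normal:
  "blaschke_structure U \<phi> (\<lambda>q. m *\<^sub>R n) (\<lambda>q. (1 / m) *\<^sub>R H q) \<Gamma>\<^sub>0 (\<lambda>q. 0)"
  unfolding blaschke_structure_def
proof (intro conjI ballI allI)
  show "pd \<phi> k differentiable_on U" for k
    using differentiable_P open_U by (rule differentiable_on_cong_open) (simp add: pd_\<phi>)
  show "(\<lambda>q. ((1 / m) *\<^sub>R H q) $ i $ j) differentiable_on U" for i j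
    by (simp add: divide_inverse) (intro differentiable_on_mult differentiable_on_const differentiable_H)
  fix q assume q: "q \<in> U"
  have frame_det: "frame_det \<phi> (\<lambda>q. m *\<^sub>R n) q = \<rho> q * m"
    using q by (simp add: frame_det_eq_det_rows4 pd_\<phi> det_frame conormal_n)
  show "frame_det \<phi> (\<lambda>q. m *\<^sub>R n) q \<noteq> 0"
    using frame_det \<rho>_nonzero[OF q] m_pos by simp
  show "pd (pd \<phi> j) i q = (\<Sum>k\<in>UNIV. \<Gamma>\<^sub>0 q i j $ k *\<^sub>R pd \<phi> k q)
          + ((1 / m) *\<^sub>R H q) $ i $ j *\<^sub>R m *\<^sub>R n" for i j
    using q m_pos by (simp add: pd_pd_\<phi> pd_\<phi> gauss)
  show "pd (\<lambda>q. m *\<^sub>R n) i q = - (\<Sum>k\<in>UNIV. (0::real^3^3) $ k $ i *\<^sub>R pd \<phi> k q)" for i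
    by (simp add: pd_eqI)
  show "det ((1 / m) *\<^sub>R H q) \<noteq> 0"
    using det_H_nonzero[OF q] m_pos by (simp add: det_scaleR_3)
  have "\<bar>det ((1 / m) *\<^sub>R H q)\<bar> = \<rho> q ^ 2 * m ^ 5 / m ^ 3"
    using abs_det_H[OF q] m_pos by (simp add: det_scaleR_3 abs_mult power_divide)
  also have "\<dots> = (\<rho> q * m)\<^sup>2"
    using m_pos by (simp add: field_simps eval_nat_numeral)
  finally show "(frame_det \<phi> (\<lambda>q. m *\<^sub>R n) q)\<^sup>2 = \<bar>det ((1 / m) *\<^sub>R H q)\<bar>"
    using frame_det by simp
qed (use open_U differentiable_\<phi> in simp_all)

context
  fixes \<xi> :: "real^3 \<Rightarrow> real^4" and h :: "real^3 \<Rightarrow> real^3^3"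
    and \<Gamma> :: "real^3 \<Rightarrow> 3 \<Rightarrow> 3 \<Rightarrow> real^3" and S :: "real^3 \<Rightarrow> real^3^3"
  assumes blaschke: "blaschke_structure U \<phi> \<xi> h \<Gamma> S"
begin

lemma H_eq_scaleR_metric: "q \<in> U \<Longrightarrow> H q = (\<Omega> q \<bullet> \<xi> q) *\<^sub>R h q"
proof -
  assume q: "q \<in> U"
  have "H q $ i $ j = \<Omega> q \<bullet> pd (pd \<phi> j) i q" for i j
    using q by (simp add: pd_pd_\<phi> conormal_pd_P)
  also have "\<dots> i j = (\<Omega> q \<bullet> \<xi> q) * h q $ i $ j" for i j
    using q by (simp add: blaschke_structureD(3)[OF blaschke] pd_\<phi> conormal_P
        inner_add_right inner_sum_right)
  finally show ?thesis
    by (simp add: vec_eq_iff)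
qed

lemma conormal_normal_nonzero: "q \<in> U \<Longrightarrow> \<Omega> q \<bullet> \<xi> q \<noteq> 0"
  using H_eq_scaleR_metric[of q] det_H_nonzero[of q] by (auto simp: det_3)

text \<open>The volume normalisation forces \<open>\<bar>\<Omega> \<cdot> \<xi>\<bar>\<^sup>5 = m\<^sup>5\<close>.\<close>
lemma abs_conormal_normal: "q \<in> U \<Longrightarrow> \<bar>\<Omega> q \<bullet> \<xi> q\<bar> = m"
proof -
  assume q: "q \<in> U"
  define \<mu> where "\<mu> = \<Omega> q \<bullet> \<xi> q"
  have "\<mu> \<noteq> 0" "\<rho> q \<noteq> 0"
    using q conormal_normal_nonzero \<rho>_nonzero unfolding \<mu>_def by auto
  have "frame_det \<phi> \<xi> q = \<rho> q * \<mu>"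
    using q by (simp add: frame_det_eq_det_rows4 pd_\<phi> det_frame \<mu>_def)
  then have "(\<rho> q * \<mu>)\<^sup>2 = \<bar>det (h q)\<bar>"
    using blaschke_structureD(5)[OF blaschke q] by simp
  also have "\<dots> = \<rho> q ^ 2 * m ^ 5 / \<bar>\<mu>\<bar> ^ 3"
    using abs_det_H[OF q] H_eq_scaleR_metric[OF q] \<open>\<mu> \<noteq> 0\<close>
    by (simp add: det_scaleR_3 abs_mult power_abs \<mu>_def field_simps)
  finally have "\<rho> q ^ 2 * \<bar>\<mu>\<bar> ^ 5 = \<rho> q ^ 2 * m ^ 5"
    using \<open>\<mu> \<noteq> 0\<close> by (simp add: field_simps power_mult_distrib eval_nat_numeral)
  then have "\<bar>\<mu>\<bar> ^ 5 = m ^ 5"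
    using \<open>\<rho> q \<noteq> 0\<close> by simp
  then show ?thesis
    unfolding \<mu>_def using m_pos by (simp add: power_eq_imp_eq_base)
qed

lemma conormal_normal_locally_constant:
  "q \<in> U \<Longrightarrow> \<exists>\<epsilon>>0. ball q \<epsilon> \<subseteq> U \<and> (\<forall>y\<in>ball q \<epsilon>. \<Omega> y \<bullet> \<xi> y = \<Omega> q \<bullet> \<xi> q)"
  using differentiable_imp_continuous_on[OF differentiable_\<Omega>]
    differentiable_imp_continuous_on[OF blaschke_structureD(2)[OF blaschke]]
  by (intro locally_constant_if_abs_constant[OF _ open_U abs_conormal_normal m_pos])
    (auto intro: continuous_intros)

lemma normal_parallel: "q \<in> U \<Longrightarrow> \<xi> q = (\<Omega> q \<bullet> \<xi> q) *\<^sub>R n"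
proof -
  assume q: "q \<in> U"
  obtain \<epsilon> where \<epsilon>: "\<epsilon> > 0" "\<forall>y\<in>ball q \<epsilon>. \<Omega> y \<bullet> \<xi> y = \<Omega> q \<bullet> \<xi> q"
    using conormal_normal_locally_constant[OF q] by blast
  have locally_const: "pd (\<lambda>y. \<Omega> y \<bullet> \<xi> y) i q = 0" for i
  proof (rule pd_locally_const)
    show "open (ball q \<epsilon>)" "q \<in> ball q \<epsilon>"
      using \<epsilon>(1) by simp_all
    show "\<Omega> y \<bullet> \<xi> y = \<Omega> q \<bullet> \<xi> q" if "y \<in> ball q \<epsilon>" for y
      using \<epsilon>(2) that by blast
  qed
  have tangent: "\<Omega> q \<bullet> pd \<xi> i q = 0" for i
    using q by (simp add: blaschke_structureD(4)[OF blaschke] pd_\<phi> conormal_P inner_sum_right)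
  have "\<Omega> differentiable (at q)" "\<xi> differentiable (at q)"
    using q open_U differentiable_\<Omega> blaschke_structureD(2)[OF blaschke]
    by (auto simp: differentiable_on_eq_differentiable_at)
  then have "\<forall>i. pd \<Omega> i q \<bullet> \<xi> q = 0"
    using locally_const tangent by (simp add: pd_inner)
  then obtain r where "\<xi> q = r *\<^sub>R n"
    using kernel_pd_\<Omega>[OF q] by blast
  then show ?thesis
    using conormal_n[OF q] by simp
qed

lemma blaschke_local_form:
  assumes "p \<in> U"
  obtains \<mu> \<epsilon> where "\<mu> \<noteq> 0" "\<epsilon> > 0" "ball p \<epsilon> \<subseteq> U"
    "\<And>q. q \<in> ball p \<epsilon> \<Longrightarrow> \<xi> q = \<mu> *\<^sub>R n \<and> h q = (1 / \<mu>) *\<^sub>R H q"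
proof -
  obtain \<epsilon> where \<epsilon>: "\<epsilon> > 0" "ball p \<epsilon> \<subseteq> U" "\<forall>q\<in>ball p \<epsilon>. \<Omega> q \<bullet> \<xi> q = \<Omega> p \<bullet> \<xi> p"
    using conormal_normal_locally_constant[OF assms] by blast
  have "\<xi> q = (\<Omega> p \<bullet> \<xi> p) *\<^sub>R n \<and> h q = (1 / (\<Omega> p \<bullet> \<xi> p)) *\<^sub>R H q" if "q \<in> ball p \<epsilon>" for q
  proof -
    have "q \<in> U" "\<Omega> q \<bullet> \<xi> q = \<Omega> p \<bullet> \<xi> p"
      using that \<epsilon> by blast+
    then show ?thesis
      using normal_parallel[of q] H_eq_scaleR_metric[of q] conormal_normal_nonzero[of q] by simp
  qed
  then show ?thesis
    using that \<epsilon> conormal_normal_nonzero[OF assms] by blast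
qed

lemma shape_operator_zero: "p \<in> U \<Longrightarrow> S p = 0"
proof -
  assume p: "p \<in> U"
  obtain \<mu> \<epsilon> where "\<mu> \<noteq> 0" "\<epsilon> > 0" "ball p \<epsilon> \<subseteq> U"
    and near: "\<And>q. q \<in> ball p \<epsilon> \<Longrightarrow> \<xi> q = \<mu> *\<^sub>R n \<and> h q = (1 / \<mu>) *\<^sub>R H q"
    using blaschke_local_form[OF p] by blast
  have "pd \<xi> i p = 0" for i
  proof (rule pd_locally_const)
    show "open (ball p \<epsilon>)" "p \<in> ball p \<epsilon>"
      using \<open>\<epsilon> > 0\<close> by simp_all
    show "\<xi> q = \<mu> *\<^sub>R n" if "q \<in> ball p \<epsilon>" for q
      using near[OF that] ..
  qed
  then have "(\<Sum>k\<in>UNIV. (\<chi> k. S p $ k $ i) $ k *\<^sub>R P k p) = 0" for i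
    using blaschke_structureD(4)[OF blaschke p, of i] p by (simp add: pd_\<phi>)
  then have "(\<chi> k. S p $ k $ i) = 0" for i
    using independent_P[OF p] by blast
  then show "S p = 0"
    by (simp add: vec_eq_iff)
qed

lemma christoffel_eq: "p \<in> U \<Longrightarrow> \<Gamma> p = \<Gamma>\<^sub>0 p"
proof -
  assume p: "p \<in> U"
  obtain \<mu> \<epsilon> where "\<mu> \<noteq> 0" "\<epsilon> > 0" "ball p \<epsilon> \<subseteq> U"
    and near: "\<And>q. q \<in> ball p \<epsilon> \<Longrightarrow> \<xi> q = \<mu> *\<^sub>R n \<and> h q = (1 / \<mu>) *\<^sub>R H q"
    using blaschke_local_form[OF p] by blast
  then have "\<xi> p = \<mu> *\<^sub>R n" "h p = (1 / \<mu>) *\<^sub>R H p"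
    by simp_all
  with \<open>\<mu> \<noteq> 0\<close> have "h p $ i $ j *\<^sub>R \<xi> p = H p $ i $ j *\<^sub>R n" for i j
    by simp
  then have "(\<Sum>k\<in>UNIV. (\<Gamma> p i j - \<Gamma>\<^sub>0 p i j) $ k *\<^sub>R P k p) = 0" for i j
    using blaschke_structureD(3)[OF blaschke p, of j i] gauss[OF p, of j i] p
    by (simp add: pd_pd_\<phi> pd_\<phi> scaleR_diff_left sum_subtractf)
  then have "\<Gamma> p i j - \<Gamma>\<^sub>0 p i j = 0" for i j
    by (rule independent_P[OF p])
  then show "\<Gamma> p = \<Gamma>\<^sub>0 p"
    by (simp add: fun_eq_iff)
qed

end

end

locale block_conormal_frame = conormal_frame +
  fixes A B A' B' g1 g2 g3 :: "real \<Rightarrow> real" and a b d :: real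
  assumes H_block: "\<And>q. q \<in> U \<Longrightarrow> H q = block_form (A (q$1)) (B (q$1)) a b d"
    and \<Gamma>\<^sub>0_model: "\<And>q. q \<in> U \<Longrightarrow> \<Gamma>\<^sub>0 q = christoffel_model (g1 (q$1)) (g2 (q$1)) (g3 (q$1)) a b d"
    and has_derivative_A: "\<And>q. q \<in> U \<Longrightarrow> (A has_real_derivative A' (q$1)) (at (q$1))"
    and has_derivative_B: "\<And>q. q \<in> U \<Longrightarrow> (B has_real_derivative B' (q$1)) (at (q$1))"
    and A_nonzero: "\<And>q. q \<in> U \<Longrightarrow> A (q$1) \<noteq> 0"
    and B_nonzero: "\<And>q. q \<in> U \<Longrightarrow> B (q$1) \<noteq> 0"
    and apolar: "\<And>q. q \<in> U \<Longrightarrow>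
      g2 (q$1) - B' (q$1) / (2 * B (q$1)) = - (g1 (q$1) - A' (q$1) / (2 * A (q$1))) / 2"
    and tensor_nonzero: "\<And>q. q \<in> U \<Longrightarrow> g1 (q$1) \<noteq> A' (q$1) / (2 * A (q$1))"
    and hess_det: "a * d - b\<^sup>2 = -1"
begin

lemma blaschke_structure_pointwise_SO11:
  assumes blaschke: "blaschke_structure U \<phi> \<xi> h \<Gamma> S" and p: "p \<in> U"
  shows "S p = 0 \<and> indefinite_form (h p) \<and> matrix_group_iso (sym_group (h p) (diff_tensor h \<Gamma> p)) SO11"
proof -
  obtain \<mu> \<epsilon> where "\<mu> \<noteq> 0" "\<epsilon> > 0" "ball p \<epsilon> \<subseteq> U"
    and near: "\<And>q. q \<in> ball p \<epsilon> \<Longrightarrow> \<xi> q = \<mu> *\<^sub>R n \<and> h q = (1 / \<mu>) *\<^sub>R H q"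
    using blaschke_local_form[OF blaschke p] by blast
  define A\<^sub>\<mu> B\<^sub>\<mu> where "A\<^sub>\<mu> t = A t / \<mu>" and "B\<^sub>\<mu> t = B t / \<mu>" for t
  have h: "h q = block_form (A\<^sub>\<mu> (q$1)) (B\<^sub>\<mu> (q$1)) a b d" if "q \<in> ball p \<epsilon>" for q
    using near[OF that] H_block that \<open>ball p \<epsilon> \<subseteq> U\<close>
    by (auto simp: block_form_scaleR A\<^sub>\<mu>_def B\<^sub>\<mu>_def)
  have derivatives: "(A\<^sub>\<mu> has_real_derivative A' (p$1) / \<mu>) (at (p$1))"
    "(B\<^sub>\<mu> has_real_derivative B' (p$1) / \<mu>) (at (p$1))"
    unfolding A\<^sub>\<mu>_def B\<^sub>\<mu>_def using has_derivative_A[OF p] has_derivative_B[OF p]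
    by (simp_all add: DERIV_cdivide)
  have nonzero: "A\<^sub>\<mu> (p$1) \<noteq> 0" "B\<^sub>\<mu> (p$1) \<noteq> 0"
    using A_nonzero[OF p] B_nonzero[OF p] \<open>\<mu> \<noteq> 0\<close> by (simp_all add: A\<^sub>\<mu>_def B\<^sub>\<mu>_def)
  have \<Gamma>: "\<Gamma> p i j = christoffel_model (g1 (p$1)) (g2 (p$1)) (g3 (p$1)) a b d i j" for i j
    using christoffel_eq[OF blaschke p] \<Gamma>\<^sub>0_model[OF p] by simp
  have ratios: "A' (p$1) / \<mu> / (2 * A\<^sub>\<mu> (p$1)) = A' (p$1) / (2 * A (p$1))"
    "B' (p$1) / \<mu> / (2 * B\<^sub>\<mu> (p$1)) = B' (p$1) / (2 * B (p$1))"
    using \<open>\<mu> \<noteq> 0\<close> by (simp_all add: A\<^sub>\<mu>_def B\<^sub>\<mu>_def)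
  have "g2 (p$1) - B' (p$1) / \<mu> / (2 * B\<^sub>\<mu> (p$1)) =
               - (g1 (p$1) - A' (p$1) / \<mu> / (2 * A\<^sub>\<mu> (p$1))) / 2"
    and "g1 (p$1) - A' (p$1) / \<mu> / (2 * A\<^sub>\<mu> (p$1)) \<noteq> 0"
    unfolding ratios using apolar[OF p] tensor_nonzero[OF p] by simp_all
  from matrix_group_iso_SO11_block_form[where V = "ball p \<epsilon>" and p = p and h = h and \<Gamma> = \<Gamma>,
      OF _ _ h derivatives nonzero hess_det \<Gamma> this]
  have "matrix_group_iso (sym_group (h p) (diff_tensor h \<Gamma> p)) SO11"
    using \<open>\<epsilon> > 0\<close> by simp
  moreover have "indefinite_form (h p)"
    using h[of p] \<open>\<epsilon> > 0\<close> indefinite_block_form[OF hess_det \<open>B\<^sub>\<mu> (p$1) \<noteq> 0\<close>] by simp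
  ultimately show ?thesis
    using shape_operator_zero[OF blaschke p] by blast
qed

theorem improper_indefinite_SO11_symmetric:
  "improper_affine_hypersphere U \<phi> \<and> indefinite_hypersurface U \<phi> \<and> pointwise_symmetry U \<phi> SO11"
  using blaschke_structure_constant_normal blaschke_structure_pointwise_SO11
  unfolding improper_affine_hypersphere_def indefinite_hypersurface_def pointwise_symmetry_def
    has_blaschke_normal_def
  by blast

end

section \<open>The two immersions\<close>

definition paraboloid :: "real \<Rightarrow> real \<Rightarrow> real \<Rightarrow> real \<Rightarrow> real \<Rightarrow> real \<Rightarrow> real \<Rightarrow> real \<Rightarrow> real" where
  "paraboloid a b d e g k v w = (a * v\<^sup>2 + 2 * b * v * w + d * w\<^sup>2) / 2 + e * v + g * w + k"

lemma open_parameter_domain: "open N \<Longrightarrow> open {p::real^3. p$1 > 0 \<and> (p$2, p$3) \<in> N}"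
proof -
  assume "open N"
  have "{p::real^3. p$1 > 0 \<and> (p$2, p$3) \<in> N} = {p. 0 < p$1} \<inter> (\<lambda>p. (p$2, p$3)) -` N"
    by auto
  moreover have "open {p::real^3. 0 < p$1}"
    by (intro open_Collect_less continuous_intros)
  moreover have "open ((\<lambda>p::real^3. (p$2, p$3)) -` N)"
    using \<open>open N\<close> by (intro continuous_open_vimage continuous_intros)
  ultimately show ?thesis
    by (simp add: open_Int)
qed

definition cone_immersion :: "real \<Rightarrow> real \<Rightarrow> real \<Rightarrow> real \<Rightarrow> real \<Rightarrow> real \<Rightarrow> real \<Rightarrow> real^3 \<Rightarrow> real^4" where
  "cone_immersion c a b d e g k q =
     vector [q$1 * q$2, q$1 * q$3, q$1 * paraboloid a b d e g k (q$2) (q$3) - c * (q$1)^4, q$1]"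

definition cone_frame :: "real \<Rightarrow> real \<Rightarrow> real \<Rightarrow> real \<Rightarrow> real \<Rightarrow> real \<Rightarrow> real \<Rightarrow> 3 \<Rightarrow> real^3 \<Rightarrow> real^4" where
  "cone_frame c a b d e g k j q =
     (if j = 1 then vector [q$2, q$3, paraboloid a b d e g k (q$2) (q$3) - 4 * c * (q$1)^3, 1]
      else if j = 2 then vector [q$1, 0, q$1 * (a * q$2 + b * q$3 + e), 0]
      else vector [0, q$1, q$1 * (b * q$2 + d * q$3 + g), 0])"

definition cone_conormal :: "real \<Rightarrow> real \<Rightarrow> real \<Rightarrow> real \<Rightarrow> real \<Rightarrow> real \<Rightarrow> real \<Rightarrow> real^3 \<Rightarrow> real^4" where
  "cone_conormal c a b d e g k q =
     vector [- (a * q$2 + b * q$3 + e), - (b * q$2 + d * q$3 + g), 1,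
       q$2 * (a * q$2 + b * q$3 + e) + q$3 * (b * q$2 + d * q$3 + g)
         - paraboloid a b d e g k (q$2) (q$3) + 4 * c * (q$1)^3]"

lemma pd_cone_immersion: "pd (cone_immersion c a b d e g k) j q = cone_frame c a b d e g k j q"
  using exhaust_3[of j] unfolding cone_immersion_def cone_frame_def paraboloid_def
  by (elim disjE; simp; auto intro!: pd_vector4 derivative_eq_intros simp: axis_def algebra_simps)

lemma pd_cone_frame:
  "pd (cone_frame c a b d e g k j) i q =
     (if i = 1 \<and> j = 1 then vector [0, 0, - 12 * c * (q$1)^2, 0]
      else if i = 1 \<and> j = 2 \<or> i = 2 \<and> j = 1 then vector [1, 0, a * q$2 + b * q$3 + e, 0]
      else if i = 1 \<and> j = 3 \<or> i = 3 \<and> j = 1 then vector [0, 1, b * q$2 + d * q$3 + g, 0]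
      else vector [0, 0, q$1 * hess_coeff a b d i j, 0])"
  using exhaust_3[of j] exhaust_3[of i] unfolding cone_frame_def hess_coeff_def paraboloid_def
  by (elim disjE; simp; auto intro!: pd_vector4 derivative_eq_intros simp: axis_def algebra_simps)

lemma pd_cone_conormal:
  "pd (cone_conormal c a b d e g k) i q =
     (if i = 1 then vector [0, 0, 0, 12 * c * (q$1)^2]
      else if i = 2 then vector [- a, - b, 0, a * q$2 + b * q$3]
      else vector [- b, - d, 0, b * q$2 + d * q$3])"
  using exhaust_3[of i] unfolding cone_conormal_def paraboloid_def
  by (elim disjE; simp; auto intro!: pd_vector4 derivative_eq_intros simp: axis_def algebra_simps)

lemma det_cone_frame:
  "det (rows4 (cone_frame c a b d e g k 1 q) (cone_frame c a b d e g k 2 q) (cone_frame c a b d e g k 3 q) x)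
     = - (q$1)\<^sup>2 * (cone_conormal c a b d e g k q \<bullet> x)"
  by (simp add: det_4 cone_frame_def cone_conormal_def inner_vec_def sum_4 algebra_simps
      power2_eq_square power3_eq_cube)

lemma kernel_pd_cone_conormal:
  assumes "q$1 \<noteq> 0" "c \<noteq> 0" "a * d - b\<^sup>2 = -1"
    and "\<forall>i. pd (cone_conormal c a b d e g k) i q \<bullet> x = 0"
  shows "\<exists>r. x = r *\<^sub>R axis 3 1"
proof -
  have "12 * c * (q$1)\<^sup>2 * x$4 = 0" "a * x$1 + b * x$2 = (a * q$2 + b * q$3) * x$4"
    "b * x$1 + d * x$2 = (b * q$2 + d * q$3) * x$4"
    using assms(4)[rule_format, of 1] assms(4)[rule_format, of 2] assms(4)[rule_format, of 3]
    by (simp_all add: pd_cone_conormal inner_vec_def sum_4 algebra_simps)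
  then have "x$4 = 0" "a * x$1 + b * x$2 = 0" "b * x$1 + d * x$2 = 0"
    using assms(1,2) by simp_all
  moreover from this have "x$1 = 0" "x$2 = 0"
    using assms(3) by algebra+
  ultimately have "x = x$3 *\<^sub>R axis 3 1"
    by (simp add: vec_eq_iff forall_4 axis_def)
  then show ?thesis ..
qed

lemma gauss_cone_frame:
  assumes "q$1 \<noteq> 0"
  shows "pd (cone_frame c a b d e g k j) i q =
           (\<Sum>l\<in>UNIV. christoffel_model 0 (1 / q$1) 0 a b d i j $ l *\<^sub>R cone_frame c a b d e g k l q)
           + block_form (- 12 * c * (q$1)\<^sup>2) (q$1) a b d $ i $ j *\<^sub>R axis 3 1"
  using exhaust_3[of i] exhaust_3[of j] assms
  by (auto simp: pd_cone_frame cone_frame_def christoffel_model_def hess_coeff_def block_form_def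
      sum_3 vec_eq_iff forall_4 axis_def field_simps)

lemma cone_block_conormal_frame:
  fixes f :: "real \<Rightarrow> real \<Rightarrow> real"
  assumes N: "open N" and Q: "a * d - b\<^sup>2 = -1" and c: "c \<noteq> 0"
    and f: "\<And>v w. (v, w) \<in> N \<Longrightarrow> f v w = paraboloid a b d e g k v w"
  shows "block_conormal_frame {p. p$1 > 0 \<and> (p$2, p$3) \<in> N}
    (\<lambda>p. vector [p$1 * p$2, p$1 * p$3, p$1 * f (p$2) (p$3) - c * (p$1)^4, p$1])
    (cone_frame c a b d e g k) (cone_conormal c a b d e g k) (\<lambda>q. - (q$1)\<^sup>2) (axis 3 1)
    (\<lambda>q. block_form (- 12 * c * (q$1)\<^sup>2) (q$1) a b d) (\<lambda>q. christoffel_model 0 (1 / q$1) 0 a b d)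
    (root 5 (12 * \<bar>c\<bar>)) (\<lambda>t. - 12 * c * t\<^sup>2) (\<lambda>t. t) (\<lambda>t. - 24 * c * t) (\<lambda>t. 1)
    (\<lambda>t. 0) (\<lambda>t. 1 / t) (\<lambda>t. 0) a b d"
    (is "block_conormal_frame ?U ?\<phi> ?P ?\<Omega> _ _ ?H _ _ _ _ _ _ _ _ _ _ _ _")
proof unfold_locales
  show U: "open ?U"
    using N by (rule open_parameter_domain)
  have \<phi>: "?\<phi> q = cone_immersion c a b d e g k q" if "q \<in> ?U" for q
    using that f by (simp add: cone_immersion_def)
  show "?\<phi> differentiable_on ?U"
  proof (rule differentiable_on_cong_open[OF _ U])
    show "cone_immersion c a b d e g k differentiable_on ?U"
      unfolding cone_immersion_def[abs_def] paraboloid_def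
      by (auto intro!: differentiable_at_imp_differentiable_on derivative_intros)
  qed (simp add: \<phi>)
  show "pd ?\<phi> j q = ?P j q" if "q \<in> ?U" for q j
    using pd_cong[OF U that \<phi>] by (simp add: pd_cone_immersion)
  show "?P j differentiable_on ?U" for j
    using exhaust_3[of j] unfolding cone_frame_def paraboloid_def
    by (auto intro!: differentiable_at_imp_differentiable_on derivative_intros)
  show "?\<Omega> differentiable_on ?U"
    unfolding cone_conormal_def paraboloid_def
    by (auto intro!: differentiable_at_imp_differentiable_on derivative_intros)
  show "(\<lambda>q. ?H q $ i $ j) differentiable_on ?U" for i j
    by (rule differentiable_on_block_form_nth)
      (auto intro!: differentiable_at_imp_differentiable_on derivative_intros)
  fix q assume q: "q \<in> ?U"
  then have "q$1 > 0"
    by simp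
  show "det (rows4 (?P 1 q) (?P 2 q) (?P 3 q) x) = - (q$1)\<^sup>2 * (?\<Omega> q \<bullet> x)" for x
    by (rule det_cone_frame)
  show "- (q$1)\<^sup>2 \<noteq> 0" "q$1 \<noteq> 0" "- 12 * c * (q$1)\<^sup>2 \<noteq> 0"
    using \<open>q$1 > 0\<close> c by simp_all
  show "?\<Omega> q \<bullet> axis 3 1 = 1"
    by (simp add: cone_conormal_def inner_axis)
  show "\<forall>i. pd ?\<Omega> i q \<bullet> x = 0 \<Longrightarrow> \<exists>r. x = r *\<^sub>R axis 3 1" for x
    using \<open>q$1 > 0\<close> by (intro kernel_pd_cone_conormal[OF _ c Q]) simp_all
  show "pd (?P j) i q = (\<Sum>l\<in>UNIV. christoffel_model 0 (1 / q$1) 0 a b d i j $ l *\<^sub>R ?P l q)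
      + ?H q $ i $ j *\<^sub>R axis 3 1" for i j
    using \<open>q$1 > 0\<close> by (simp add: gauss_cone_frame)
  show "\<bar>det (?H q)\<bar> = (- (q$1)\<^sup>2)\<^sup>2 * root 5 (12 * \<bar>c\<bar>) ^ 5"
    using Q by (simp add: det_block_form abs_mult real_root_pow_pos2 power2_eq_square)
  show "((\<lambda>t. - 12 * c * t\<^sup>2) has_real_derivative - 24 * c * q$1) (at (q$1))"
    "((\<lambda>t. t) has_real_derivative 1) (at (q$1))"
    by (auto intro!: derivative_eq_intros)
  show "1 / q$1 - 1 / (2 * q$1) = - (0 - - 24 * c * q$1 / (2 * (- 12 * c * (q$1)\<^sup>2))) / 2"
    "0 \<noteq> - 24 * c * q$1 / (2 * (- 12 * c * (q$1)\<^sup>2))"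
    using \<open>q$1 > 0\<close> c by (simp_all add: field_simps power2_eq_square)
qed (use c Q in simp_all)

definition transl_immersion :: "real \<Rightarrow> real \<Rightarrow> real \<Rightarrow> real \<Rightarrow> real \<Rightarrow> real \<Rightarrow> real \<Rightarrow> real^3 \<Rightarrow> real^4" where
  "transl_immersion c a b d e g k q =
     vector [q$2, q$3, paraboloid a b d e g k (q$2) (q$3) + c * (q$1)^3, (q$1)^4]"

definition transl_frame :: "real \<Rightarrow> real \<Rightarrow> real \<Rightarrow> real \<Rightarrow> real \<Rightarrow> real \<Rightarrow> 3 \<Rightarrow> real^3 \<Rightarrow> real^4" where
  "transl_frame c a b d e g j q =
     (if j = 1 then vector [0, 0, 3 * c * (q$1)\<^sup>2, 4 * (q$1)^3]
      else if j = 2 then vector [1, 0, a * q$2 + b * q$3 + e, 0]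
      else vector [0, 1, b * q$2 + d * q$3 + g, 0])"

definition transl_conormal :: "real \<Rightarrow> real \<Rightarrow> real \<Rightarrow> real \<Rightarrow> real \<Rightarrow> real \<Rightarrow> real^3 \<Rightarrow> real^4" where
  "transl_conormal c a b d e g q =
     vector [- 4 * q$1 * (a * q$2 + b * q$3 + e), - 4 * q$1 * (b * q$2 + d * q$3 + g), 4 * q$1, - 3 * c]"

lemma pd_transl_immersion: "pd (transl_immersion c a b d e g k) j q = transl_frame c a b d e g j q"
  using exhaust_3[of j] unfolding transl_immersion_def transl_frame_def paraboloid_def
  by (elim disjE; simp; auto intro!: pd_vector4 derivative_eq_intros simp: axis_def algebra_simps)

lemma pd_transl_frame:
  "pd (transl_frame c a b d e g j) i q =
     (if i = 1 \<and> j = 1 then vector [0, 0, 6 * c * q$1, 12 * (q$1)\<^sup>2]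
      else if i = 1 \<or> j = 1 then vector [0, 0, 0, 0] else vector [0, 0, hess_coeff a b d i j, 0])"
  using exhaust_3[of j] exhaust_3[of i] unfolding transl_frame_def hess_coeff_def
  by (elim disjE; simp; auto intro!: pd_vector4 derivative_eq_intros simp: axis_def algebra_simps)

lemma pd_transl_conormal:
  "pd (transl_conormal c a b d e g) i q =
     (if i = 1 then vector [- 4 * (a * q$2 + b * q$3 + e), - 4 * (b * q$2 + d * q$3 + g), 4, 0]
      else if i = 2 then vector [- 4 * q$1 * a, - 4 * q$1 * b, 0, 0]
      else vector [- 4 * q$1 * b, - 4 * q$1 * d, 0, 0])"
  using exhaust_3[of i] unfolding transl_conormal_def
  by (elim disjE; simp; auto intro!: pd_vector4 derivative_eq_intros simp: axis_def algebra_simps)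

lemma det_transl_frame:
  "det (rows4 (transl_frame c a b d e g 1 q) (transl_frame c a b d e g 2 q) (transl_frame c a b d e g 3 q) x)
     = - (q$1)\<^sup>2 * (transl_conormal c a b d e g q \<bullet> x)"
  by (simp add: det_4 transl_frame_def transl_conormal_def inner_vec_def sum_4 algebra_simps
      power2_eq_square power3_eq_cube)

lemma kernel_pd_transl_conormal:
  assumes "q$1 \<noteq> 0" "c \<noteq> 0" "a * d - b\<^sup>2 = -1"
    and "\<forall>i. pd (transl_conormal c a b d e g) i q \<bullet> x = 0"
  shows "\<exists>r. x = r *\<^sub>R vector [0, 0, 0, - 1 / (3 * c)]"
proof -
  have "x$3 = (a * q$2 + b * q$3 + e) * x$1 + (b * q$2 + d * q$3 + g) * x$2"
    "q$1 * (a * x$1 + b * x$2) = 0" "q$1 * (b * x$1 + d * x$2) = 0"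
    using assms(4)[rule_format, of 1] assms(4)[rule_format, of 2] assms(4)[rule_format, of 3]
    by (simp_all add: pd_transl_conormal inner_vec_def sum_4 algebra_simps)
  moreover from this have "a * x$1 + b * x$2 = 0" "b * x$1 + d * x$2 = 0"
    using assms(1) by simp_all
  then have "x$1 = 0" "x$2 = 0"
    using assms(3) by algebra+
  ultimately have "x = (- 3 * c * x$4) *\<^sub>R vector [0, 0, 0, - 1 / (3 * c)]"
    using assms(2) by (simp add: vec_eq_iff forall_4)
  then show ?thesis ..
qed

lemma gauss_transl_frame:
  assumes "q$1 \<noteq> 0" "c \<noteq> 0"
  shows "pd (transl_frame c a b d e g j) i q =
           (\<Sum>l\<in>UNIV. christoffel_model (2 / q$1) 0 (1 / (3 * c * (q$1)\<^sup>2)) a b d i j $ l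
              *\<^sub>R transl_frame c a b d e g l q)
           + block_form (- 12 * c * (q$1)\<^sup>2) (4 * q$1) a b d $ i $ j *\<^sub>R vector [0, 0, 0, - 1 / (3 * c)]"
  using exhaust_3[of i] exhaust_3[of j] assms
  by (auto simp: pd_transl_frame transl_frame_def christoffel_model_def hess_coeff_def block_form_def
      sum_3 vec_eq_iff forall_4 axis_def field_simps power2_eq_square power3_eq_cube)

lemma transl_block_conormal_frame:
  fixes f :: "real \<Rightarrow> real \<Rightarrow> real"
  assumes N: "open N" and Q: "a * d - b\<^sup>2 = -1" and c: "c \<noteq> 0"
    and f: "\<And>v w. (v, w) \<in> N \<Longrightarrow> f v w = paraboloid a b d e g k v w"
  shows "block_conormal_frame {p. p$1 > 0 \<and> (p$2, p$3) \<in> N}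
    (\<lambda>p. vector [p$2, p$3, f (p$2) (p$3) + c * (p$1)^3, (p$1)^4])
    (transl_frame c a b d e g) (transl_conormal c a b d e g) (\<lambda>q. - (q$1)\<^sup>2)
    (vector [0, 0, 0, - 1 / (3 * c)]) (\<lambda>q. block_form (- 12 * c * (q$1)\<^sup>2) (4 * q$1) a b d)
    (\<lambda>q. christoffel_model (2 / q$1) 0 (1 / (3 * c * (q$1)\<^sup>2)) a b d)
    (root 5 (192 * \<bar>c\<bar>)) (\<lambda>t. - 12 * c * t\<^sup>2) (\<lambda>t. 4 * t) (\<lambda>t. - 24 * c * t) (\<lambda>t. 4)
    (\<lambda>t. 2 / t) (\<lambda>t. 0) (\<lambda>t. 1 / (3 * c * t\<^sup>2)) a b d"
    (is "block_conormal_frame ?U ?\<phi> ?P ?\<Omega> _ ?n ?H _ _ _ _ _ _ _ _ _ _ _ _")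
proof unfold_locales
  show U: "open ?U"
    using N by (rule open_parameter_domain)
  have \<phi>: "?\<phi> q = transl_immersion c a b d e g k q" if "q \<in> ?U" for q
    using that f by (simp add: transl_immersion_def)
  show "?\<phi> differentiable_on ?U"
  proof (rule differentiable_on_cong_open[OF _ U])
    show "transl_immersion c a b d e g k differentiable_on ?U"
      unfolding transl_immersion_def[abs_def] paraboloid_def
      by (auto intro!: differentiable_at_imp_differentiable_on derivative_intros)
  qed (simp add: \<phi>)
  show "pd ?\<phi> j q = ?P j q" if "q \<in> ?U" for q j
    using pd_cong[OF U that \<phi>] by (simp add: pd_transl_immersion)
  show "?P j differentiable_on ?U" for j
    using exhaust_3[of j] unfolding transl_frame_def
    by (auto intro!: differentiable_at_imp_differentiable_on derivative_intros)
  show "?\<Omega> differentiable_on ?U"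
    unfolding transl_conormal_def
    by (auto intro!: differentiable_at_imp_differentiable_on derivative_intros)
  show "(\<lambda>q. ?H q $ i $ j) differentiable_on ?U" for i j
    by (rule differentiable_on_block_form_nth)
      (auto intro!: differentiable_at_imp_differentiable_on derivative_intros)
  fix q assume q: "q \<in> ?U"
  then have "q$1 > 0"
    by simp
  show "det (rows4 (?P 1 q) (?P 2 q) (?P 3 q) x) = - (q$1)\<^sup>2 * (?\<Omega> q \<bullet> x)" for x
    by (rule det_transl_frame)
  show "- (q$1)\<^sup>2 \<noteq> 0" "4 * q$1 \<noteq> 0" "- 12 * c * (q$1)\<^sup>2 \<noteq> 0"
    using \<open>q$1 > 0\<close> c by simp_all
  show "?\<Omega> q \<bullet> ?n = 1"
    using c by (simp add: transl_conormal_def inner_vec_def sum_4)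
  show "\<forall>i. pd ?\<Omega> i q \<bullet> x = 0 \<Longrightarrow> \<exists>r. x = r *\<^sub>R ?n" for x
    using \<open>q$1 > 0\<close> by (intro kernel_pd_transl_conormal[OF _ c Q]) simp_all
  show "pd (?P j) i q = (\<Sum>l\<in>UNIV. christoffel_model (2 / q$1) 0 (1 / (3 * c * (q$1)\<^sup>2)) a b d i j $ l
      *\<^sub>R ?P l q) + ?H q $ i $ j *\<^sub>R ?n" for i j
    using \<open>q$1 > 0\<close> c by (simp add: gauss_transl_frame)
  show "\<bar>det (?H q)\<bar> = (- (q$1)\<^sup>2)\<^sup>2 * root 5 (192 * \<bar>c\<bar>) ^ 5"
    using Q by (simp add: det_block_form abs_mult real_root_pow_pos2 power2_eq_square)
  show "((\<lambda>t. - 12 * c * t\<^sup>2) has_real_derivative - 24 * c * q$1) (at (q$1))"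
    "((\<lambda>t. 4 * t) has_real_derivative 4) (at (q$1))"
    by (auto intro!: derivative_eq_intros)
  show "0 - 4 / (2 * (4 * q$1)) = - (2 / q$1 - - 24 * c * q$1 / (2 * (- 12 * c * (q$1)\<^sup>2))) / 2"
    "2 / q$1 \<noteq> - 24 * c * q$1 / (2 * (- 12 * c * (q$1)\<^sup>2))"
    using \<open>q$1 > 0\<close> c by (simp_all add: field_simps power2_eq_square)
qed (use c Q in simp_all)

theorem theorem8p21:
  fixes N :: "(real \<times> real) set" and f :: "real \<Rightarrow> real \<Rightarrow> real" and c :: real
    and \<phi> :: "real^3 \<Rightarrow> real^4"
  assumes "hyperbolic_paraboloid_graph N f"
    and "c \<noteq> 0"
    and "\<phi> = (\<lambda>p. vector [p$1 * p$2, p$1 * p$3, p$1 * f (p$2) (p$3) - c * (p$1)^4, p$1])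
       \<or> \<phi> = (\<lambda>p. vector [p$2, p$3, f (p$2) (p$3) + c * (p$1)^3, (p$1)^4])"
  shows "improper_affine_hypersphere {p. p$1 > 0 \<and> (p$2, p$3) \<in> N} \<phi>
       \<and> indefinite_hypersurface {p. p$1 > 0 \<and> (p$2, p$3) \<in> N} \<phi>
       \<and> pointwise_symmetry {p. p$1 > 0 \<and> (p$2, p$3) \<in> N} \<phi> SO11"
proof -
  obtain a b d e g k where N: "open N" and Q: "a * d - b\<^sup>2 = -1"
    and "\<forall>(v, w)\<in>N. f v w = (a * v\<^sup>2 + 2 * b * v * w + d * w\<^sup>2) / 2 + e * v + g * w + k"
    using assms(1) unfolding hyperbolic_paraboloid_graph_def by blast
  then have f: "\<And>v w. (v, w) \<in> N \<Longrightarrow> f v w = paraboloid a b d e g k v w"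
    by (auto simp: paraboloid_def)
  note cone = cone_block_conormal_frame[OF N Q assms(2) f]
  note transl = transl_block_conormal_frame[OF N Q assms(2) f]
  from assms(3) show ?thesis
    using block_conormal_frame.improper_indefinite_SO11_symmetric[OF cone]
      block_conormal_frame.improper_indefinite_SO11_symmetric[OF transl]
    by blast
qed

end
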